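(* Let $0<\varepsilon\le1/2$, $q\in(0,1]$ and let $\mathcal G=(G_n)_{n\in\mathbb N}$ be an expander sequence. Let $(\tilde G_n)$ be such that each $\tilde G_n$ is obtained by deleting edges of $G_n$ such that each vertex keeps at least a $(1/2+\varepsilon)$ fraction of its edges. Let $\mathcal P\in\{push,pull,pp\}$, run on $\tilde G_n$, and suppose that $|I_t|<\sqrt{\log n}$. Then there is $\tau=o(\log n)$ such that whp $|I^{(\mathcal P)}_{t+\tau}|\ge\sqrt{\log n}$.
   Context: Rumour spreading protocols in synchronous rounds with each message transmission succeeding independently with probability $q$. push: every informed vertex chooses a neighbour independently and uniformly at random (iuar) and informs it. pull: every uninformed vertex chooses a neighbour iuar and becomes informed if that neighbour is informed. push\&pull (pp): every vertex chooses a neighbour iuar and if one of the two is informed both become informed. $I_t=I_t^{(\mathcal P)}$ is the set of informed vertices at the beginning of round $t$. An expander sequence is a sequence $(G_n)$ of connected graphs, $G_n$ on $n$ vertices with minimum degree $\delta_n$, maximum degree $\Delta_n$, and $\lambda_n=\max\{|\mu_2|,|\mu_n|\}$ (adjacency eigenvalues), such that $\Delta_n/\delta_n=1+o(1)$ and $\lambda_n=o(\Delta_n)$. "Keeps at least a $(1/2+\varepsilon)$ fraction" means $d_{\tilde G_n}(v)\ge(1/2+\varepsilon)d_{G_n}(v)$. whp means with probability $1-o(1)$ as $n\to\infty$ (conditional on the state at round $t$); natural log. *)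

theory Defs
  imports "HOL-Probability.Probability" "HOL-Library.Landau_Symbols"
          "Jordan_Normal_Form.Matrix" "Jordan_Normal_Form.Char_Poly"
begin

(* A graph on the vertex set {..<n} is given by an edge predicate E :: nat => nat => bool. *)

definition simple_graph :: "nat \<Rightarrow> (nat \<Rightarrow> nat \<Rightarrow> bool) \<Rightarrow> bool" where
  "simple_graph n E \<longleftrightarrow>
     (\<forall>u v. E u v \<longrightarrow> u < n \<and> v < n) \<and> (\<forall>u v. E u v \<longrightarrow> E v u) \<and> (\<forall>u. \<not> E u u)"

definition nbrs :: "nat \<Rightarrow> (nat \<Rightarrow> nat \<Rightarrow> bool) \<Rightarrow> nat \<Rightarrow> nat set" where
  "nbrs n E v = {u. u < n \<and> E v u}"

definition deg :: "nat \<Rightarrow> (nat \<Rightarrow> nat \<Rightarrow> bool) \<Rightarrow> nat \<Rightarrow> nat" where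
  "deg n E v = card (nbrs n E v)"

definition min_deg :: "nat \<Rightarrow> (nat \<Rightarrow> nat \<Rightarrow> bool) \<Rightarrow> nat" where
  "min_deg n E = Min (deg n E ` {..<n})"

definition max_deg :: "nat \<Rightarrow> (nat \<Rightarrow> nat \<Rightarrow> bool) \<Rightarrow> nat" where
  "max_deg n E = Max (deg n E ` {..<n})"

definition connected_graph :: "nat \<Rightarrow> (nat \<Rightarrow> nat \<Rightarrow> bool) \<Rightarrow> bool" where
  "connected_graph n E \<longleftrightarrow> (\<forall>u<n. \<forall>v<n. (u, v) \<in> {(a, b). E a b}\<^sup>*)"

definition adj_matrix :: "nat \<Rightarrow> (nat \<Rightarrow> nat \<Rightarrow> bool) \<Rightarrow> real mat" where
  "adj_matrix n E = mat n n (\<lambda>(i, j). if E i j then 1 else 0)"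

(* adjacency eigenvalues mu_1 >= mu_2 >= ... >= mu_n, listed with multiplicity
   (the characteristic polynomial of the real symmetric adjacency matrix splits over the reals) *)
definition adj_eigenvalues :: "nat \<Rightarrow> (nat \<Rightarrow> nat \<Rightarrow> bool) \<Rightarrow> real list" where
  "adj_eigenvalues n E = (THE es. length es = n \<and> sorted_wrt (\<ge>) es \<and>
       char_poly (adj_matrix n E) = (\<Prod>a\<leftarrow>es. [:- a, 1:]))"

definition lambda_graph :: "nat \<Rightarrow> (nat \<Rightarrow> nat \<Rightarrow> bool) \<Rightarrow> real" where
  "lambda_graph n E = (let es = adj_eigenvalues n E in max \<bar>es ! 1\<bar> \<bar>es ! (n - 1)\<bar>)"

(* G n is the edge predicate of the n-th graph, on vertex set {..<n} *)
definition expander_sequence :: "(nat \<Rightarrow> nat \<Rightarrow> nat \<Rightarrow> bool) \<Rightarrow> bool" where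
  "expander_sequence G \<longleftrightarrow>
     (\<forall>n. simple_graph n (G n) \<and> connected_graph n (G n)) \<and>
     ((\<lambda>n. real (max_deg n (G n)) / real (min_deg n (G n))) \<longlonglongrightarrow> 1) \<and>
     (\<lambda>n. lambda_graph n (G n)) \<in> o(\<lambda>n. real (max_deg n (G n)))"

datatype protocol = Push | Pull | PushPull

(* each vertex v chooses a neighbour iuar (None if it has no neighbour) and a success coin
   (the message transmitted on this call succeeds with probability q), all independent *)
definition choice_pmf :: "nat \<Rightarrow> (nat \<Rightarrow> nat \<Rightarrow> bool) \<Rightarrow> real \<Rightarrow> nat \<Rightarrow> (nat option \<times> bool) pmf" where
  "choice_pmf n E q v =
     pair_pmf (if nbrs n E v = {} then return_pmf None else map_pmf Some (pmf_of_set (nbrs n E v)))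
              (bernoulli_pmf q)"

definition round_choices :: "nat \<Rightarrow> (nat \<Rightarrow> nat \<Rightarrow> bool) \<Rightarrow> real \<Rightarrow> (nat \<Rightarrow> nat option \<times> bool) pmf" where
  "round_choices n E q = Pi_pmf {..<n} (None, False) (choice_pmf n E q)"

fun next_informed :: "protocol \<Rightarrow> nat \<Rightarrow> nat set \<Rightarrow> (nat \<Rightarrow> nat option \<times> bool) \<Rightarrow> nat set" where
  "next_informed Push n I c =
     I \<union> {u. \<exists>v\<in>I. v < n \<and> c v = (Some u, True)}"
| "next_informed Pull n I c =
     I \<union> {v. v < n \<and> (\<exists>u\<in>I. c v = (Some u, True))}"
| "next_informed PushPull n I c =
     I \<union> {u. \<exists>v\<in>I. v < n \<and> c v = (Some u, True)}
       \<union> {v. v < n \<and> (\<exists>u\<in>I. c v = (Some u, True))}"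

definition rumour_round :: "protocol \<Rightarrow> nat \<Rightarrow> (nat \<Rightarrow> nat \<Rightarrow> bool) \<Rightarrow> real \<Rightarrow> nat set \<Rightarrow> nat set pmf" where
  "rumour_round P n E q I = map_pmf (next_informed P n I) (round_choices n E q)"

primrec rumour_run :: "protocol \<Rightarrow> nat \<Rightarrow> (nat \<Rightarrow> nat \<Rightarrow> bool) \<Rightarrow> real \<Rightarrow> nat \<Rightarrow> nat set \<Rightarrow> nat set pmf" where
  "rumour_run P n E q 0 I = return_pmf I"
| "rumour_run P n E q (Suc k) I = bind_pmf (rumour_run P n E q k I) (rumour_round P n E q)"

end

(* Once a rumour has reached a nonempty set I with |I| < sqrt(log n), every round enlarges I with
   probability at least p = 1 - exp(-q/8). Writing x^T A x <= mu_1 <v,x>^2 + lambda |x|^2 for the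
   adjacency form of G, near-regularity forces the top eigenvector v to be nearly constant, so a set
   of size o(n) spans few edges of G. As H keeps more than half of every vertex's edges, some
   informed vertex then has a constant fraction of its H-neighbours uninformed, and push (or pull)
   informs one of them with probability at least p. Consequently 2^(-|I|) is a supermartingale
   contracting by 1 - p/2 while |I| < m, so after m L rounds, with m = ceil(sqrt(log n)) and
   L = ceil((log n)^(1/4)), fewer than m vertices are informed with probability at most
   2^m (1 - p/2)^(m L) <= 2 (1 - p/2)^L -> 0, while m L = o(log n). *)

theory Submission
  imports Defs "Jordan_Normal_Form.Schur_Decomposition" "HOL-Real_Asymp.Real_Asymp"
begin

section \<open>Quadratic forms of real symmetric matrices\<close>

lemma scalar_prod_self_ge_0: "0 \<le> scalar_prod (v :: real vec) v"
  unfolding scalar_prod_def by (intro sum_nonneg) auto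

lemma scalar_prod_eq_sum:
  "v \<in> carrier_vec n \<Longrightarrow> w \<in> carrier_vec n \<Longrightarrow> scalar_prod v w = (\<Sum>i<n. v $ i * w $ i)"
  unfolding scalar_prod_def by (simp add: atLeast0LessThan)

lemma orthogonal_mat_of_normalized_cols:
  fixes ws :: "real vec list"
  assumes ws: "corthogonal ws" "set ws \<subseteq> carrier_vec n" "length ws = n"
  defines "W \<equiv> mat_of_cols n (map (\<lambda>w. (1 / sqrt (scalar_prod w w)) \<cdot>\<^sub>v w) ws)"
  shows "W \<in> carrier_mat n n" "transpose_mat W * W = 1\<^sub>m n" "W * transpose_mat W = 1\<^sub>m n"
    and "j < n \<Longrightarrow> col W j = (1 / sqrt (scalar_prod (ws ! j) (ws ! j))) \<cdot>\<^sub>v ws ! j"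
proof -
  define us where "us = map (\<lambda>w. (1 / sqrt (scalar_prod w w)) \<cdot>\<^sub>v w) ws"
  have wsc: "i < n \<Longrightarrow> ws ! i \<in> carrier_vec n" for i using ws by auto
  have usc: "i < n \<Longrightarrow> us ! i \<in> carrier_vec n" for i using wsc ws(3) by (auto simp: us_def)
  have ws_pos: "scalar_prod (ws ! i) (ws ! i) > 0" if i: "i < n" for i
    using corthogonalD[OF ws(1), of i i] scalar_prod_self_ge_0[of "ws ! i"] i ws(3)
    by (auto simp: order_le_less)
  have us_orthonormal: "scalar_prod (us ! i) (us ! j) = (if i = j then 1 else 0)"
    if i: "i < n" and j: "j < n" for i j
  proof -
    have "scalar_prod (us ! i) (us ! j) = (1 / sqrt (scalar_prod (ws ! i) (ws ! i)))
        * (1 / sqrt (scalar_prod (ws ! j) (ws ! j))) * scalar_prod (ws ! i) (ws ! j)"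
      using i j ws(3) wsc[OF i] wsc[OF j]
      by (simp add: us_def smult_scalar_prod_distrib scalar_prod_smult_distrib)
    then show ?thesis
      using ws_pos[OF i] corthogonalD[OF ws(1), of i j] i j ws(3) by (auto simp: field_simps)
  qed
  show W: "W \<in> carrier_mat n n"
    unfolding W_def using mat_of_cols_carrier(1)[of n us] ws(3) by (simp add: us_def)
  have colW: "col W j = us ! j" if "j < n" for j
    unfolding W_def us_def[symmetric] using that ws(3) usc by (simp add: col_mat_of_cols us_def)
  then show "j < n \<Longrightarrow> col W j = (1 / sqrt (scalar_prod (ws ! j) (ws ! j))) \<cdot>\<^sub>v ws ! j"
    using ws(3) by (simp add: us_def)
  show WTW: "transpose_mat W * W = 1\<^sub>m n"
    by (rule eq_matI) (use W in \<open>auto simp: index_mult_mat colW us_orthonormal\<close>)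
  show "W * transpose_mat W = 1\<^sub>m n"
    by (rule mat_mult_left_right_inverse[OF _ W WTW]) (use W in simp)
qed

lemma unit_vec_extends_to_orthogonal_mat:
  fixes v :: "real vec"
  assumes v: "v \<in> carrier_vec n" and v1: "scalar_prod v v = 1"
  shows "\<exists>W \<in> carrier_mat n n. transpose_mat W * W = 1\<^sub>m n \<and> W * transpose_mat W = 1\<^sub>m n \<and> col W 0 = v"
proof -
  have n: "n \<noteq> 0"
    using v v1 by (cases n) (auto simp: scalar_prod_def)
  have v0: "v \<noteq> 0\<^sub>v n" using v1 by auto
  interpret cof_vec_space n "TYPE(real)" .
  define b where "b = basis_completion v"
  from basis_completion[OF v v0, folded b_def]
  have b: "set b \<subseteq> carrier_vec n" "distinct b" "\<not> lin_dep (set b)" "length b = n" "hd b = v"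
    by auto
  from b n obtain vs where bv: "b = v # vs" by (cases b) auto
  define ws where "ws = gram_schmidt n b"
  from gram_schmidt_result[OF b(1) b(2) b(3) ws_def]
  have ws: "corthogonal ws" "set ws \<subseteq> carrier_vec n" "length ws = n" by (auto simp: b(4))
  have "ws ! 0 = v"
    unfolding ws_def bv using gram_schmidt_hd[OF v] ws(3) n by (metis bv hd_conv_nth list.size(3) ws_def)
  then show ?thesis
    using orthogonal_mat_of_normalized_cols[OF ws] n v1 by (intro bexI) auto
qed

lemma real_unit_eigenvector:
  fixes A :: "real mat"
  assumes A: "A \<in> carrier_mat n n" and root: "poly (char_poly A) e = 0"
  shows "\<exists>v \<in> carrier_vec n. scalar_prod v v = 1 \<and> A *\<^sub>v v = e \<cdot>\<^sub>v v"
proof -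
  have "eigenvalue A e" using eigenvalue_root_char_poly[OF A] root by simp
  then have "eigenvector A (find_eigenvector A e) e" by (rule find_eigenvector[OF A])
  then obtain w where w: "w \<in> carrier_vec n" "w \<noteq> 0\<^sub>v n" "A *\<^sub>v w = e \<cdot>\<^sub>v w"
    unfolding eigenvector_def using A by auto
  define s where "s = scalar_prod w w"
  have s: "s > 0" using conjugate_square_greater_0_vec[OF w(1)] w(2) by (simp add: s_def)
  define v where "v = (1 / sqrt s) \<cdot>\<^sub>v w"
  have "scalar_prod v v = 1"
    using s w(1) by (simp add: v_def smult_scalar_prod_distrib scalar_prod_smult_distrib s_def[symmetric])
  moreover have "A *\<^sub>v v = e \<cdot>\<^sub>v v"
    unfolding v_def using mult_mat_vec[OF A w(1)] w(3) by (simp add: smult_smult_assoc mult.commute)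
  moreover have "v \<in> carrier_vec n" using w(1) by (simp add: v_def)
  ultimately show ?thesis by blast
qed

lemma transpose_orthogonal_conj:
  fixes A W :: "real mat"
  assumes A: "A \<in> carrier_mat n n" and W: "W \<in> carrier_mat n n" and sym: "transpose_mat A = A"
  shows "transpose_mat (transpose_mat W * A * W) = transpose_mat W * A * W"
proof -
  have WT: "transpose_mat W \<in> carrier_mat n n" using W by simp
  have "transpose_mat (transpose_mat W * A * W) = transpose_mat W * transpose_mat (transpose_mat W * A)"
    by (rule transpose_mult[OF mult_carrier_mat[OF WT A] W])
  also have "\<dots> = transpose_mat W * (A * W)"
    by (simp only: transpose_mult[OF WT A] transpose_transpose sym)
  finally show ?thesis by (simp add: assoc_mult_mat[OF WT A W])
qed

lemma col_0_orthogonal_conj: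
  fixes A W :: "real mat"
  assumes A: "A \<in> carrier_mat n n" and W: "W \<in> carrier_mat n n" and WTW: "transpose_mat W * W = 1\<^sub>m n"
    and n: "0 < n" and colW: "col W 0 = v" and Av: "A *\<^sub>v v = e \<cdot>\<^sub>v v"
  shows "col (transpose_mat W * A * W) 0 = e \<cdot>\<^sub>v unit_vec n 0"
proof -
  have WT: "transpose_mat W \<in> carrier_mat n n" using W by simp
  have v: "v \<in> carrier_vec n" using W by (auto simp: colW[symmetric] col_def)
  have WTv: "transpose_mat W *\<^sub>v v = unit_vec n 0"
  proof (rule eq_vecI)
    fix i assume "i < dim_vec (unit_vec n 0)"
    then have i: "i < n" by simp
    have "(transpose_mat W *\<^sub>v v) $ i = (transpose_mat W * W) $$ (i, 0)"
      using i W n by (simp add: index_mult_mat colW[symmetric])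
    then show "(transpose_mat W *\<^sub>v v) $ i = unit_vec n 0 $ i" using WTW i n by simp
  qed (use W in simp)
  have "col (transpose_mat W * A * W) 0 = (transpose_mat W * A) *\<^sub>v col W 0"
    by (rule col_mult2[OF mult_carrier_mat[OF WT A] W n])
  also have "\<dots> = transpose_mat W *\<^sub>v (A *\<^sub>v v)"
    unfolding colW by (rule assoc_mult_mat_vec[OF WT A v])
  also have "\<dots> = e \<cdot>\<^sub>v unit_vec n 0" using Av mult_mat_vec[OF WT v] WTv by simp
  finally show ?thesis .
qed

lemma sym_mat_block_form:
  fixes B :: "real mat"
  assumes B: "B \<in> carrier_mat (Suc m) (Suc m)" and sym: "transpose_mat B = B"
    and col0: "col B 0 = e \<cdot>\<^sub>v unit_vec (Suc m) 0"
  shows "\<exists>A3 \<in> carrier_mat m m. transpose_mat A3 = A3 \<and>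
           B = four_block_mat (mat 1 1 (\<lambda>_. e)) (0\<^sub>m 1 m) (0\<^sub>m m 1) A3"
proof -
  have Bi0: "B $$ (i, 0) = (if i = 0 then e else 0)" if "i < Suc m" for i
    using arg_cong[OF col0, of "\<lambda>x. x $ i"] that B by simp
  have B0j: "B $$ (0, j) = (if j = 0 then e else 0)" if "j < Suc m" for j
  proof -
    have "B $$ (0, j) = transpose_mat B $$ (j, 0)" using B that by simp
    then show ?thesis using sym Bi0[OF that] by simp
  qed
  define A3 where "A3 = mat m m (\<lambda>(i, j). B $$ (Suc i, Suc j))"
  have "transpose_mat A3 = A3"
  proof (rule eq_matI)
    fix i j assume "i < dim_row A3" "j < dim_col A3"
    then have "i < m" "j < m" by (auto simp: A3_def)
    moreover have "B $$ (Suc j, Suc i) = transpose_mat B $$ (Suc i, Suc j)" if "i < m" "j < m"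
      using that B by simp
    ultimately show "transpose_mat A3 $$ (i, j) = A3 $$ (i, j)" by (simp add: A3_def sym)
  qed (auto simp: A3_def)
  moreover have "B = four_block_mat (mat 1 1 (\<lambda>_. e)) (0\<^sub>m 1 m) (0\<^sub>m m 1) A3"
  proof (rule eq_matI)
    fix i j assume "i < dim_row (four_block_mat (mat 1 1 (\<lambda>_. e)) (0\<^sub>m 1 m) (0\<^sub>m m 1) A3)"
      "j < dim_col (four_block_mat (mat 1 1 (\<lambda>_. e)) (0\<^sub>m 1 m) (0\<^sub>m m 1) A3)"
    then have i: "i < Suc m" and j: "j < Suc m" by (auto simp: A3_def)
    show "B $$ (i, j) = four_block_mat (mat 1 1 (\<lambda>_. e)) (0\<^sub>m 1 m) (0\<^sub>m m 1) A3 $$ (i, j)"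
    proof (cases "i = 0 \<or> j = 0")
      case True
      then show ?thesis using Bi0 B0j i j by (auto simp: A3_def)
    next
      case False
      then obtain i1 j1 where "i = Suc i1" "j = Suc j1" by (cases i; cases j) auto
      then show ?thesis using i j by (simp add: A3_def)
    qed
  qed (use B in \<open>auto simp: A3_def\<close>)
  moreover have "A3 \<in> carrier_mat m m" by (simp add: A3_def)
  ultimately show ?thesis by blast
qed

lemma index_mult_mat_vec_sum:
  "B \<in> carrier_mat n n' \<Longrightarrow> y \<in> carrier_vec n' \<Longrightarrow> i < n \<Longrightarrow>
    (B *\<^sub>v y) $ i = (\<Sum>j<n'. B $$ (i, j) * y $ j)"
  by (auto simp: scalar_prod_def atLeast0LessThan intro!: sum.cong)

lemma quadratic_form_four_block_diag:
  fixes A3 :: "real mat"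
  assumes A3: "A3 \<in> carrier_mat m m" and y: "y \<in> carrier_vec (Suc m)"
  defines "z \<equiv> vec m (\<lambda>i. y $ Suc i)"
  shows "scalar_prod y (four_block_mat (mat 1 1 (\<lambda>_. e)) (0\<^sub>m 1 m) (0\<^sub>m m 1) A3 *\<^sub>v y)
           = e * (y $ 0)^2 + scalar_prod z (A3 *\<^sub>v z)"
    and "scalar_prod z z = scalar_prod y y - (y $ 0)^2"
proof -
  let ?B = "four_block_mat (mat 1 1 (\<lambda>_. e)) (0\<^sub>m 1 m) (0\<^sub>m m 1) A3"
  have z: "z \<in> carrier_vec m" by (simp add: z_def)
  have B: "?B \<in> carrier_mat (Suc m) (Suc m)" using A3 by auto
  have By: "(?B *\<^sub>v y) $ i = (if i = 0 then e * y $ 0 else (A3 *\<^sub>v z) $ (i - 1))"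
    if i: "i < Suc m" for i
  proof -
    have "(?B *\<^sub>v y) $ i = (\<Sum>j<Suc m. ?B $$ (i, j) * y $ j)"
      by (rule index_mult_mat_vec_sum[OF B y i])
    also have "\<dots> = ?B $$ (i, 0) * y $ 0 + (\<Sum>j<m. ?B $$ (i, Suc j) * y $ Suc j)"
      by (simp add: sum.lessThan_Suc_shift del: sum.lessThan_Suc)
    also have "\<dots> = (if i = 0 then e * y $ 0 else (A3 *\<^sub>v z) $ (i - 1))"
      using i A3 by (cases i) (auto simp: z_def scalar_prod_eq_sum[of _ m] row_def)
    finally show ?thesis .
  qed
  have "scalar_prod y (?B *\<^sub>v y) = (\<Sum>i<Suc m. y $ i * (?B *\<^sub>v y) $ i)"
    using y B by (simp add: scalar_prod_eq_sum[of _ "Suc m"])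
  also have "\<dots> = e * (y $ 0)^2 + scalar_prod z (A3 *\<^sub>v z)"
    using A3 z By
    by (simp add: sum.lessThan_Suc_shift scalar_prod_eq_sum[of _ m] z_def power2_eq_square
        del: sum.lessThan_Suc)
  finally show "scalar_prod y (?B *\<^sub>v y) = e * (y $ 0)^2 + scalar_prod z (A3 *\<^sub>v z)" .
  show "scalar_prod z z = scalar_prod y y - (y $ 0)^2"
    using y by (simp add: scalar_prod_eq_sum[of _ "Suc m"] scalar_prod_eq_sum[of _ m] z_def
        sum.lessThan_Suc_shift power2_eq_square del: sum.lessThan_Suc)
qed

lemma quadratic_form_orthogonal_conj:
  fixes A W :: "real mat"
  assumes A: "A \<in> carrier_mat n n" and W: "W \<in> carrier_mat n n"
    and WWT: "W * transpose_mat W = 1\<^sub>m n" and x: "x \<in> carrier_vec n"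
  defines "y \<equiv> transpose_mat W *\<^sub>v x"
  shows "scalar_prod x (A *\<^sub>v x) = scalar_prod y ((transpose_mat W * A * W) *\<^sub>v y)"
    and "scalar_prod y y = scalar_prod x x"
proof -
  have WT: "transpose_mat W \<in> carrier_mat n n" using W by simp
  have y: "y \<in> carrier_vec n" using WT x by (simp add: y_def)
  have xWy: "x = W *\<^sub>v y"
    unfolding y_def using assoc_mult_mat_vec[OF W WT x] WWT x by simp
  have "scalar_prod x (A *\<^sub>v x) = scalar_prod y (transpose_mat W *\<^sub>v (A *\<^sub>v (W *\<^sub>v y)))"
    using xWy transpose_vec_mult_scalar[OF WT, of "A *\<^sub>v (W *\<^sub>v y)" y] A W y by simp
  also have "\<dots> = scalar_prod y ((transpose_mat W * A * W) *\<^sub>v y)"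
    using A W WT y by (simp add: assoc_mult_mat_vec[of _ n n _ n])
  finally show "scalar_prod x (A *\<^sub>v x) = scalar_prod y ((transpose_mat W * A * W) *\<^sub>v y)" .
  have "scalar_prod y y = scalar_prod x (W *\<^sub>v y)"
    using transpose_vec_mult_scalar[OF W y x] by (simp add: y_def)
  then show "scalar_prod y y = scalar_prod x x" using xWy by simp
qed

lemma sym_mat_deflation:
  fixes A :: "real mat"
  assumes A: "A \<in> carrier_mat n n" and sym: "transpose_mat A = A" and root: "poly (char_poly A) e = 0"
  shows "\<exists>v A3. v \<in> carrier_vec n \<and> scalar_prod v v = 1 \<and> A *\<^sub>v v = e \<cdot>\<^sub>v v \<and>
     A3 \<in> carrier_mat (n - 1) (n - 1) \<and> transpose_mat A3 = A3 \<and> char_poly A = [:-e, 1:] * char_poly A3 \<and>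
     (\<forall>x \<in> carrier_vec n. \<exists>z \<in> carrier_vec (n - 1). scalar_prod z z = scalar_prod x x - (scalar_prod v x)^2 \<and>
         scalar_prod x (A *\<^sub>v x) = e * (scalar_prod v x)^2 + scalar_prod z (A3 *\<^sub>v z))"
proof -
  obtain v where v: "v \<in> carrier_vec n" "scalar_prod v v = 1" and Av: "A *\<^sub>v v = e \<cdot>\<^sub>v v"
    using real_unit_eigenvector[OF A root] by blast
  then obtain m where n: "n = Suc m" by (cases n) (auto simp: scalar_prod_def)
  obtain W where W: "W \<in> carrier_mat n n" and WTW: "transpose_mat W * W = 1\<^sub>m n"
    and WWT: "W * transpose_mat W = 1\<^sub>m n" and colW: "col W 0 = v"
    using unit_vec_extends_to_orthogonal_mat[OF v] by blast
  let ?E = "mat 1 1 (\<lambda>_. e) :: real mat"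
  have "\<exists>A3 \<in> carrier_mat m m. transpose_mat A3 = A3 \<and>
      transpose_mat W * A * W = four_block_mat ?E (0\<^sub>m 1 m) (0\<^sub>m m 1) A3"
  proof (rule sym_mat_block_form)
    show "transpose_mat W * A * W \<in> carrier_mat (Suc m) (Suc m)" using A W n by simp
    show "transpose_mat (transpose_mat W * A * W) = transpose_mat W * A * W"
      by (rule transpose_orthogonal_conj[OF A W sym])
    show "col (transpose_mat W * A * W) 0 = e \<cdot>\<^sub>v unit_vec (Suc m) 0"
      using col_0_orthogonal_conj[OF A W WTW _ colW Av] n by simp
  qed
  then obtain A3 where A3: "A3 \<in> carrier_mat m m" "transpose_mat A3 = A3"
    and block: "transpose_mat W * A * W = four_block_mat ?E (0\<^sub>m 1 m) (0\<^sub>m m 1) A3"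
    by blast
  have "similar_mat (transpose_mat W * A * W) A"
    unfolding similar_mat_def similar_mat_wit_def
    by (rule exI[of _ "transpose_mat W"], rule exI[of _ W]) (use A W WTW WWT in \<open>simp add: Let_def\<close>)
  then have "char_poly A = char_poly (four_block_mat ?E (0\<^sub>m 1 m) (0\<^sub>m m 1) A3)"
    by (simp add: block char_poly_similar)
  also have "\<dots> = [:-e, 1:] * char_poly A3"
  proof -
    have "char_poly ?E = [:-e, 1:]" by (simp add: char_poly_defs det_def sign_def)
    then show ?thesis using char_poly_four_block_zeros_col[of ?E "0\<^sub>m 1 m" m A3] A3(1) by simp
  qed
  finally have cp: "char_poly A = [:-e, 1:] * char_poly A3" .
  have quad: "\<exists>z \<in> carrier_vec m. scalar_prod z z = scalar_prod x x - (scalar_prod v x)^2 \<and>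
         scalar_prod x (A *\<^sub>v x) = e * (scalar_prod v x)^2 + scalar_prod z (A3 *\<^sub>v z)"
    if x: "x \<in> carrier_vec n" for x
  proof -
    define y where "y = transpose_mat W *\<^sub>v x"
    have y: "y \<in> carrier_vec (Suc m)" using W x n by (simp add: y_def)
    have y0: "y $ 0 = scalar_prod v x"
      using n W x by (simp add: y_def colW[symmetric])
    show ?thesis
      using quadratic_form_orthogonal_conj[OF A W WWT x, folded y_def]
        quadratic_form_four_block_diag(1)[OF A3(1) y, of e]
        quadratic_form_four_block_diag(2)[OF A3(1) y] block y0
      by (intro bexI[of _ "vec m (\<lambda>i. y $ Suc i)"]) auto
  qed
  show ?thesis using v Av A3 cp quad n by auto
qed

lemma hermitian_form_real_sym_mat:
  fixes A :: "real mat" and w :: "complex vec"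
  assumes A: "A \<in> carrier_mat n n" and sym: "transpose_mat A = A"
  defines "S \<equiv> (\<Sum>i<n. \<Sum>j<n. cnj (w $ i) * of_real (A $$ (i, j)) * w $ j)"
  shows "cnj S = S"
proof -
  have symA: "A $$ (i, j) = A $$ (j, i)" if "i < n" "j < n" for i j
    using that A arg_cong[OF sym, of "\<lambda>B. B $$ (j, i)"] by simp
  have "cnj S = (\<Sum>i<n. \<Sum>j<n. w $ i * of_real (A $$ (i, j)) * cnj (w $ j))"
    unfolding S_def by simp
  also have "\<dots> = (\<Sum>j<n. \<Sum>i<n. w $ i * of_real (A $$ (i, j)) * cnj (w $ j))"
    by (rule sum.swap)
  also have "\<dots> = S"
    unfolding S_def by (intro sum.cong refl) (simp add: symA mult_ac)
  finally show ?thesis .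
qed

lemma sym_mat_char_poly_real_root:
  fixes A :: "real mat"
  assumes A: "A \<in> carrier_mat n n" and sym: "transpose_mat A = A" and n: "n > 0"
  shows "\<exists>e. poly (char_poly A) e = 0"
proof -
  define Ac where "Ac = map_mat complex_of_real A"
  have Ac: "Ac \<in> carrier_mat n n" using A by (simp add: Ac_def)
  have cpAc: "char_poly Ac = map_poly of_real (char_poly A)"
    unfolding Ac_def by (rule of_real_hom.char_poly_hom[OF A])
  have "degree (char_poly Ac) = n" using degree_monic_char_poly[OF Ac] by simp
  then have "\<not> constant (poly (char_poly Ac))" using n by (simp add: constant_degree)
  then obtain z where z: "poly (char_poly Ac) z = 0" using fundamental_theorem_of_algebra by blast
  have "eigenvalue Ac z" using eigenvalue_root_char_poly[OF Ac] z by simp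
  then obtain w where "eigenvector Ac w z" unfolding eigenvalue_def by blast
  then have w: "w \<in> carrier_vec n" "w \<noteq> 0\<^sub>v n" "Ac *\<^sub>v w = z \<cdot>\<^sub>v w"
    unfolding eigenvector_def using Ac by auto
  define N where "N = (\<Sum>i<n. (cmod (w $ i))^2)"
  define S where "S = (\<Sum>i<n. \<Sum>j<n. cnj (w $ i) * of_real (A $$ (i, j)) * w $ j)"
  have Acw: "(Ac *\<^sub>v w) $ i = (\<Sum>j<n. of_real (A $$ (i, j)) * w $ j)" if "i < n" for i
    using that A w(1) by (simp add: Ac_def scalar_prod_eq_sum[of _ n])
  have "S = (\<Sum>i<n. cnj (w $ i) * (Ac *\<^sub>v w) $ i)"
    unfolding S_def by (intro sum.cong refl) (simp add: Acw sum_distrib_left mult.assoc)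
  also have "\<dots> = z * of_real N"
    unfolding N_def of_real_sum using w(1,3)
    by (simp add: sum_distrib_left mult_ac complex_norm_square[symmetric])
  finally have SzN: "S = z * of_real N" .
  have "N > 0"
  proof -
    obtain k where k: "k < n" "w $ k \<noteq> 0"
      using w(1,2) by (metis eq_vecI index_zero_vec(1,2) carrier_vecD)
    have "0 < (cmod (w $ k))^2" using k by simp
    also have "\<dots> \<le> N" unfolding N_def by (rule member_le_sum) (use k in auto)
    finally show ?thesis .
  qed
  have "cnj z * of_real N = z * of_real N"
    using hermitian_form_real_sym_mat[OF A sym, of w, folded S_def] SzN
    by (metis complex_cnj_complex_of_real complex_cnj_mult)
  then have "cnj z = z" using \<open>N > 0\<close> by simp
  then have "z = of_real (Re z)" by (simp add: complex_eq_iff)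
  then have "of_real (poly (char_poly A) (Re z)) = (0::complex)"
    using z cpAc by (metis of_real_hom.poly_map_poly)
  then show ?thesis by auto
qed

lemma char_poly_carrier_0:
  assumes "(A :: real mat) \<in> carrier_mat 0 0"
  shows "char_poly A = 1"
proof -
  have "degree (char_poly A) = 0" and "coeff (char_poly A) 0 = 1"
    using degree_monic_char_poly[OF assms] by simp_all
  then show ?thesis by (metis degree_eq_zeroE one_pCons coeff_pCons_0)
qed

lemma degree_prod_linear_factors: "degree (\<Prod>a\<leftarrow>es. [:- a, 1::real:]) = length es"
proof (induct es)
  case (Cons a es)
  have "degree ([:- a, 1:] * (\<Prod>a\<leftarrow>es. [:- a, 1::real:]))
      = degree [:- a, 1::real:] + degree (\<Prod>a\<leftarrow>es. [:- a, 1::real:])"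
    by (rule degree_mult_eq) (auto simp: prod_list_zero_iff)
  then show ?case using Cons by simp
qed simp

lemma roots_prod_linear_factors: "{x. poly (\<Prod>a\<leftarrow>es. [:- a, 1::real:]) x = 0} = set es"
  by (auto simp: poly_prod_list_zero_iff)

lemma prod_linear_factors_Cons_cancel:
  assumes "[:-e, 1:] * p = (\<Prod>a\<leftarrow>e # es. [:- a, 1::real:])"
  shows "p = (\<Prod>a\<leftarrow>es. [:- a, 1:])"
proof -
  have "[:-e, 1:] * p = [:-e, 1:] * (\<Prod>a\<leftarrow>es. [:- a, 1:])"
    using assms by (simp only: list.map prod_list.Cons)
  then show ?thesis by (rule mult_left_cancel[THEN iffD1, rotated]) simp
qed

lemma sorted_desc_hd_eq_Max:
  assumes "sorted_wrt (\<ge>) (es :: real list)" "es \<noteq> []"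
  shows "hd es = Max (set es)"
  using assms by (cases es) (auto intro!: Max_eqI[symmetric])

lemma prod_linear_factors_sorted_inj:
  assumes "sorted_wrt (\<ge>) (es1 :: real list)" "sorted_wrt (\<ge>) es2"
    and "(\<Prod>a\<leftarrow>es1. [:- a, 1:]) = (\<Prod>a\<leftarrow>es2. [:- a, 1:])"
  shows "es1 = es2"
  using assms
proof (induct es1 arbitrary: es2)
  case Nil
  then show ?case using degree_prod_linear_factors[of es2] by simp
next
  case (Cons a es1)
  have roots: "set (a # es1) = set es2"
    using roots_prod_linear_factors Cons(4) by metis
  then obtain b es2' where es2: "es2 = b # es2'" by (cases es2) auto
  have "a = b" using sorted_desc_hd_eq_Max[OF Cons(2)] sorted_desc_hd_eq_Max[OF Cons(3)] roots es2 by simp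
  then have "[:- a, 1:] * (\<Prod>a\<leftarrow>es1. [:- a, 1:]) = (\<Prod>a\<leftarrow>a # es2'. [:- a, 1::real:])"
    using Cons(4) es2 by (simp only: list.map prod_list.Cons)
  then have "(\<Prod>a\<leftarrow>es1. [:- a, 1:]) = (\<Prod>a\<leftarrow>es2'. [:- a, 1::real:])"
    by (rule prod_linear_factors_Cons_cancel)
  then show ?case using Cons(1) Cons(2,3) es2 \<open>a = b\<close> by simp
qed

lemma sym_mat_char_poly_splits:
  fixes A :: "real mat"
  assumes "A \<in> carrier_mat n n" and "transpose_mat A = A"
  shows "\<exists>es. char_poly A = (\<Prod>a\<leftarrow>es. [:- a, 1:])"
  using assms
proof (induct n arbitrary: A)
  case 0
  then show ?case using char_poly_carrier_0 by (intro exI[of _ "[]"]) simp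
next
  case (Suc n)
  obtain e where "poly (char_poly A) e = 0" using sym_mat_char_poly_real_root[OF Suc(2,3)] by auto
  then obtain A3 where "A3 \<in> carrier_mat n n" "transpose_mat A3 = A3"
    and cp: "char_poly A = [:-e, 1:] * char_poly A3"
    using sym_mat_deflation[OF Suc(2,3)] by auto
  then obtain es where "char_poly A3 = (\<Prod>a\<leftarrow>es. [:- a, 1:])" using Suc(1) by blast
  then show ?case using cp by (intro exI[of _ "e # es"]) simp
qed

lemma sym_mat_sorted_eigenvalues_ex1:
  fixes A :: "real mat"
  assumes A: "A \<in> carrier_mat n n" and sym: "transpose_mat A = A"
  shows "\<exists>!es. length es = n \<and> sorted_wrt (\<ge>) es \<and> char_poly A = (\<Prod>a\<leftarrow>es. [:- a, 1:])"
proof -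
  obtain es0 where es0: "char_poly A = (\<Prod>a\<leftarrow>es0. [:- a, 1:])"
    using sym_mat_char_poly_splits[OF A sym] by auto
  define es where "es = rev (sort es0)"
  have "mset (map (\<lambda>a. [:- a, 1::real:]) es) = mset (map (\<lambda>a. [:- a, 1:]) es0)"
    unfolding es_def by simp
  then have "(\<Prod>a\<leftarrow>es. [:- a, 1:]) = (\<Prod>a\<leftarrow>es0. [:- a, 1::real:])"
    by (simp only: prod_mset_prod_list[symmetric])
  then have cp: "char_poly A = (\<Prod>a\<leftarrow>es. [:- a, 1:])" using es0 by simp
  have "length es = n"
    using degree_prod_linear_factors[of es] degree_monic_char_poly[OF A] cp by simp
  moreover have "sorted_wrt (\<ge>) es" unfolding es_def sorted_wrt_rev by simp
  ultimately show ?thesis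
    using cp prod_linear_factors_sorted_inj by (intro ex1I[of _ es]) auto
qed

lemma sym_mat_quadratic_form_le_Max_eigenvalue:
  fixes A :: "real mat"
  assumes "A \<in> carrier_mat n n" "transpose_mat A = A" "char_poly A = (\<Prod>a\<leftarrow>es. [:- a, 1:])"
    and "es \<noteq> []" and "x \<in> carrier_vec n"
  shows "scalar_prod x (A *\<^sub>v x) \<le> Max (set es) * scalar_prod x x"
  using assms
proof (induct es arbitrary: n A x)
  case Nil
  then show ?case by simp
next
  case (Cons e es)
  have "poly (char_poly A) e = 0" using Cons(4) by simp
  then obtain v A3 where A3: "A3 \<in> carrier_mat (n - 1) (n - 1)" "transpose_mat A3 = A3"
    and cp: "char_poly A = [:-e, 1:] * char_poly A3"
    and quad: "\<forall>x \<in> carrier_vec n. \<exists>z \<in> carrier_vec (n - 1). scalar_prod z z = scalar_prod x x - (scalar_prod v x)^2 \<and>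
         scalar_prod x (A *\<^sub>v x) = e * (scalar_prod v x)^2 + scalar_prod z (A3 *\<^sub>v z)"
    using sym_mat_deflation[OF Cons(2,3)] by blast
  have cp3: "char_poly A3 = (\<Prod>a\<leftarrow>es. [:- a, 1:])"
    by (rule prod_linear_factors_Cons_cancel[of e]) (simp only: cp[symmetric] Cons(4))
  obtain z where z: "z \<in> carrier_vec (n - 1)" "scalar_prod z z = scalar_prod x x - (scalar_prod v x)^2"
    "scalar_prod x (A *\<^sub>v x) = e * (scalar_prod v x)^2 + scalar_prod z (A3 *\<^sub>v z)"
    using quad Cons(6) by blast
  define M where "M = Max (set (e # es))"
  have "scalar_prod z (A3 *\<^sub>v z) \<le> M * scalar_prod z z"
  proof (cases "es = []")
    case True
    then have "n - 1 = 0" using degree_monic_char_poly[OF A3(1)] cp3 by simp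
    then show ?thesis using z(1) by (simp add: scalar_prod_def)
  next
    case False
    then have "scalar_prod z (A3 *\<^sub>v z) \<le> Max (set es) * scalar_prod z z"
      using Cons(1)[OF A3 cp3 False z(1)] by simp
    also have "\<dots> \<le> M * scalar_prod z z"
      using False by (intro mult_right_mono scalar_prod_self_ge_0) (simp add: M_def)
    finally show ?thesis .
  qed
  moreover have "e * (scalar_prod v x)^2 \<le> M * (scalar_prod v x)^2"
    by (intro mult_right_mono) (simp_all add: M_def)
  ultimately have "scalar_prod x (A *\<^sub>v x) \<le> M * (scalar_prod z z + (scalar_prod v x)^2)"
    using z(3) by (simp add: distrib_left)
  then show ?case using z(2) by (simp add: M_def)
qed

lemma sym_mat_quadratic_form_top_eigenvector:
  fixes A :: "real mat"
  assumes A: "A \<in> carrier_mat n n" and sym: "transpose_mat A = A"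
    and cp: "char_poly A = (\<Prod>a\<leftarrow>es. [:- a, 1:])" and sorted: "sorted_wrt (\<ge>) es"
    and len: "2 \<le> length es"
  shows "\<exists>v \<in> carrier_vec n. scalar_prod v v = 1 \<and> A *\<^sub>v v = es ! 0 \<cdot>\<^sub>v v \<and>
    (\<forall>x \<in> carrier_vec n. scalar_prod x (A *\<^sub>v x)
        \<le> es ! 0 * (scalar_prod v x)^2 + es ! 1 * (scalar_prod x x - (scalar_prod v x)^2))"
proof -
  obtain e es' where es: "es = e # es'" using len by (cases es) auto
  have ne: "es' \<noteq> []" using len es by auto
  have "poly (char_poly A) e = 0" using cp es by simp
  then obtain v A3 where v: "v \<in> carrier_vec n" "scalar_prod v v = 1" "A *\<^sub>v v = e \<cdot>\<^sub>v v"
    and A3: "A3 \<in> carrier_mat (n - 1) (n - 1)" "transpose_mat A3 = A3"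
    and cp': "char_poly A = [:-e, 1:] * char_poly A3"
    and quad: "\<forall>x \<in> carrier_vec n. \<exists>z \<in> carrier_vec (n - 1). scalar_prod z z = scalar_prod x x - (scalar_prod v x)^2 \<and>
         scalar_prod x (A *\<^sub>v x) = e * (scalar_prod v x)^2 + scalar_prod z (A3 *\<^sub>v z)"
    using sym_mat_deflation[OF A sym] by blast
  have cp3: "char_poly A3 = (\<Prod>a\<leftarrow>es'. [:- a, 1:])"
    by (rule prod_linear_factors_Cons_cancel[of e]) (simp only: cp'[symmetric] cp es)
  have Max: "Max (set es') = es ! 1"
    using sorted_desc_hd_eq_Max[of es' ] sorted ne es by (cases es') auto
  have "scalar_prod x (A *\<^sub>v x) \<le> e * (scalar_prod v x)^2 + es ! 1 * (scalar_prod x x - (scalar_prod v x)^2)"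
    if x: "x \<in> carrier_vec n" for x
  proof -
    obtain z where z: "z \<in> carrier_vec (n - 1)" "scalar_prod z z = scalar_prod x x - (scalar_prod v x)^2"
      "scalar_prod x (A *\<^sub>v x) = e * (scalar_prod v x)^2 + scalar_prod z (A3 *\<^sub>v z)"
      using quad x by blast
    show ?thesis
      using sym_mat_quadratic_form_le_Max_eigenvalue[OF A3 cp3 ne z(1)] z Max by simp
  qed
  then show ?thesis using v es by auto
qed

section \<open>Spectral bounds for graphs\<close>

definition adj_form :: "nat \<Rightarrow> (nat \<Rightarrow> nat \<Rightarrow> bool) \<Rightarrow> (nat \<Rightarrow> real) \<Rightarrow> real" where
  "adj_form n E f = (\<Sum>i<n. \<Sum>j<n. if E i j then f i * f j else 0)"

lemma adj_matrix_carrier: "adj_matrix n E \<in> carrier_mat n n"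
  by (simp add: adj_matrix_def)

lemma adj_matrix_symmetric: "simple_graph n E \<Longrightarrow> transpose_mat (adj_matrix n E) = adj_matrix n E"
  by (rule eq_matI) (auto simp: adj_matrix_def simple_graph_def)

lemma adj_form_eq_quadratic_form:
  "scalar_prod (vec n f) (adj_matrix n E *\<^sub>v vec n f) = adj_form n E f"
proof -
  have row: "(adj_matrix n E *\<^sub>v vec n f) $ i = (\<Sum>j<n. if E i j then f j else 0)" if "i < n" for i
    using index_mult_mat_vec_sum[OF adj_matrix_carrier, of "vec n f" n i] that
    by (auto simp: adj_matrix_def intro!: sum.cong)
  have "scalar_prod (vec n f) (adj_matrix n E *\<^sub>v vec n f) = (\<Sum>i<n. f i * (adj_matrix n E *\<^sub>v vec n f) $ i)"
    using adj_matrix_carrier[of n E] by (simp add: scalar_prod_eq_sum[of _ n])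
  also have "\<dots> = adj_form n E f"
    unfolding adj_form_def by (intro sum.cong refl) (auto simp: row sum_distrib_left intro!: sum.cong)
  finally show ?thesis .
qed

lemma adj_eigenvalues:
  assumes "simple_graph n E"
  shows "length (adj_eigenvalues n E) = n" "sorted_wrt (\<ge>) (adj_eigenvalues n E)"
    "char_poly (adj_matrix n E) = (\<Prod>a\<leftarrow>adj_eigenvalues n E. [:- a, 1:])"
  using theI'[OF sym_mat_sorted_eigenvalues_ex1[OF adj_matrix_carrier adj_matrix_symmetric[OF assms]]]
  unfolding adj_eigenvalues_def by auto

lemma adj_form_spectral_bound:
  assumes sg: "simple_graph n E" and n: "2 \<le> n"
  shows "\<exists>v. (\<Sum>i<n. (v i)^2) = 1 \<and> adj_form n E v = adj_eigenvalues n E ! 0 \<and>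
    (\<forall>f. adj_form n E f \<le> adj_eigenvalues n E ! 0 * (\<Sum>i<n. v i * f i)^2
        + lambda_graph n E * ((\<Sum>i<n. (f i)^2) - (\<Sum>i<n. v i * f i)^2))"
proof -
  let ?A = "adj_matrix n E" and ?es = "adj_eigenvalues n E"
  obtain w where w: "w \<in> carrier_vec n" "scalar_prod w w = 1" "?A *\<^sub>v w = ?es ! 0 \<cdot>\<^sub>v w"
    and bound: "\<And>x. x \<in> carrier_vec n \<Longrightarrow> scalar_prod x (?A *\<^sub>v x)
        \<le> ?es ! 0 * (scalar_prod w x)^2 + ?es ! 1 * (scalar_prod x x - (scalar_prod w x)^2)"
    using sym_mat_quadratic_form_top_eigenvector[OF adj_matrix_carrier adj_matrix_symmetric[OF sg]
        adj_eigenvalues(3,2)[OF sg]] adj_eigenvalues(1)[OF sg] n by auto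
  define v where "v i = w $ i" for i
  have w_vec: "w = vec n v" using w(1) by (auto simp: v_def)
  have dot: "scalar_prod w (vec n f) = (\<Sum>i<n. v i * f i)" for f
    using w(1) by (simp add: scalar_prod_eq_sum[of _ n] v_def)
  have sq: "scalar_prod (vec n f) (vec n f) = (\<Sum>i<n. (f i)^2)" for f :: "nat \<Rightarrow> real"
    by (simp add: scalar_prod_eq_sum[of _ n] power2_eq_square)
  have v1: "(\<Sum>i<n. (v i)^2) = 1" using w(1,2) sq[of v] w_vec by simp
  have "adj_form n E v = ?es ! 0"
    using adj_form_eq_quadratic_form[of n v E] w w_vec[symmetric] by simp
  moreover have "adj_form n E f \<le> ?es ! 0 * (\<Sum>i<n. v i * f i)^2
        + lambda_graph n E * ((\<Sum>i<n. (f i)^2) - (\<Sum>i<n. v i * f i)^2)" for f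
  proof -
    have "(\<Sum>i<n. v i * f i)^2 \<le> (\<Sum>i<n. (f i)^2)"
      using Cauchy_Schwarz_ineq_sum[of v f "{..<n}"] v1 by simp
    moreover have "?es ! 1 \<le> lambda_graph n E" unfolding lambda_graph_def Let_def by simp
    ultimately have "?es ! 1 * ((\<Sum>i<n. (f i)^2) - (\<Sum>i<n. v i * f i)^2)
        \<le> lambda_graph n E * ((\<Sum>i<n. (f i)^2) - (\<Sum>i<n. v i * f i)^2)"
      by (intro mult_right_mono) auto
    then show ?thesis
      using bound[of "vec n f"] adj_form_eq_quadratic_form[of n f E] dot sq by simp
  qed
  ultimately show ?thesis using v1 by blast
qed

lemma finite_nbrs [simp]: "finite (nbrs n E v)"
  by (simp add: nbrs_def)

lemma sum_adjacent_eq_deg: "(\<Sum>j<n. if E i j then (1::real) else 0) = real (deg n E i)"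
  by (simp add: sum.If_cases deg_def nbrs_def Int_def conj_commute)

lemma deg_le_max_deg: "v < n \<Longrightarrow> deg n E v \<le> max_deg n E"
  unfolding max_deg_def by (rule Max_ge) auto

lemma min_deg_le_deg: "v < n \<Longrightarrow> min_deg n E \<le> deg n E v"
  unfolding min_deg_def by (rule Min_le) auto

lemma deg_mono: "(\<forall>u v. H u v \<longrightarrow> G u v) \<Longrightarrow> deg n H v \<le> deg n G v"
  unfolding deg_def by (rule card_mono) (auto simp: nbrs_def)

lemma lambda_graph_ge_0: "0 \<le> lambda_graph n E"
  unfolding lambda_graph_def Let_def by simp

lemma adj_form_const_one: "adj_form n E (\<lambda>_. 1) = (\<Sum>i<n. real (deg n E i))"
  unfolding adj_form_def using sum_adjacent_eq_deg by (intro sum.cong refl) (simp add: if_distrib cong: if_cong)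

lemma adj_form_indicator:
  assumes "J \<subseteq> {..<n}"
  shows "adj_form n E (\<lambda>i. if i \<in> J then 1 else 0) = (\<Sum>i\<in>J. real (card (nbrs n E i \<inter> J)))"
proof -
  have "adj_form n E (\<lambda>i. if i \<in> J then 1 else 0)
      = (\<Sum>i<n. if i \<in> J then real (card (nbrs n E i \<inter> J)) else 0)"
    unfolding adj_form_def
    by (intro sum.cong refl) (auto simp: sum.If_cases nbrs_def Int_def conj_commute)
  also have "\<dots> = (\<Sum>i\<in>J. real (card (nbrs n E i \<inter> J)))"
    using assms by (simp add: sum.If_cases Int_absorb1)
  finally show ?thesis .
qed

lemma adj_form_le_max_deg:
  assumes "simple_graph n E"
  shows "adj_form n E f \<le> real (max_deg n E) * (\<Sum>i<n. (f i)^2)"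
proof -
  have sym: "E i j = E j i" for i j using assms unfolding simple_graph_def by blast
  have "adj_form n E f \<le> (\<Sum>i<n. \<Sum>j<n. if E i j then ((f i)^2 + (f j)^2) / 2 else 0)"
    unfolding adj_form_def
    using sum_squares_bound[of "f i" "f j" for i j] by (intro sum_mono) (simp add: mult_ac)
  also have "\<dots> = (\<Sum>i<n. \<Sum>j<n. if E i j then (f i)^2 / 2 else 0) + (\<Sum>i<n. \<Sum>j<n. if E i j then (f j)^2 / 2 else 0)"
    by (simp add: sum.distrib[symmetric] add_divide_distrib if_distrib cong: if_cong)
  also have "(\<Sum>i<n. \<Sum>j<n. if E i j then (f j)^2 / 2 else 0) = (\<Sum>i<n. \<Sum>j<n. if E i j then (f i)^2 / 2 else 0)"
    by (subst sum.swap) (simp add: sym)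
  also have "(\<Sum>i<n. \<Sum>j<n. if E i j then (f i)^2 / 2 else 0) = (\<Sum>i<n. real (deg n E i) * (f i)^2 / 2)"
  proof (intro sum.cong refl)
    fix i
    have "(\<Sum>j<n. if E i j then (f i)^2 / 2 else 0) = (\<Sum>j<n. (if E i j then 1 else 0) * ((f i)^2 / 2))"
      by (intro sum.cong refl) simp
    also have "\<dots> = (\<Sum>j<n. if E i j then 1 else 0) * ((f i)^2 / 2)"
      by (rule sum_distrib_right[symmetric])
    also have "\<dots> = real (deg n E i) * (f i)^2 / 2"
      by (simp only: sum_adjacent_eq_deg)
    finally show "(\<Sum>j<n. if E i j then (f i)^2 / 2 else 0) = real (deg n E i) * (f i)^2 / 2" .
  qed
  also have "\<dots> + \<dots> \<le> (\<Sum>i<n. real (max_deg n E) * (f i)^2)"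
    by (simp add: sum.distrib[symmetric]) (intro sum_mono mult_right_mono, auto simp: deg_le_max_deg)
  finally show ?thesis by (simp add: sum_distrib_left)
qed

lemma adj_top_eigenvector_near_constant:
  assumes sg: "simple_graph n E" and n: "2 \<le> n" and gap: "lambda_graph n E < real (max_deg n E)"
  defines "D \<equiv> real (max_deg n E)" and "d \<equiv> real (min_deg n E)" and "lam \<equiv> lambda_graph n E"
  shows "\<exists>v. (\<Sum>i<n. (v i)^2) = 1 \<and> real n - (\<Sum>i<n. v i)^2 \<le> real n * (D - d) / (D - lam) \<and>
    (\<forall>f. adj_form n E f \<le> D * (\<Sum>i<n. v i * f i)^2 + lam * (\<Sum>i<n. (f i)^2))"
proof -
  obtain v where v1: "(\<Sum>i<n. (v i)^2) = 1" and Qv: "adj_form n E v = adj_eigenvalues n E ! 0"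
    and bound: "\<And>f. adj_form n E f \<le> adj_eigenvalues n E ! 0 * (\<Sum>i<n. v i * f i)^2
        + lam * ((\<Sum>i<n. (f i)^2) - (\<Sum>i<n. v i * f i)^2)"
    using adj_form_spectral_bound[OF sg n] unfolding lam_def by blast
  have mu_le_D: "adj_eigenvalues n E ! 0 \<le> D"
    using adj_form_le_max_deg[OF sg, of v] v1 Qv by (simp add: D_def)
  have lam0: "0 \<le> lam" unfolding lam_def by (rule lambda_graph_ge_0)
  have bound': "adj_form n E f \<le> D * (\<Sum>i<n. v i * f i)^2 + lam * (\<Sum>i<n. (f i)^2)
      - (D - adj_eigenvalues n E ! 0 + lam) * (\<Sum>i<n. v i * f i)^2" for f
    using bound[of f] by (simp add: algebra_simps)
  define a where "a = (\<Sum>i<n. v i)"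
  \<comment> \<open>evaluated at the constant vector, whose form is at least n d, the bound forces v to be nearly constant\<close>
  have "real n * d \<le> adj_form n E (\<lambda>_. 1)"
    using sum_mono[of "{..<n}" "\<lambda>_. d" "\<lambda>i. real (deg n E i)"] min_deg_le_deg[of _ n E]
    by (simp add: adj_form_const_one d_def)
  also have "\<dots> \<le> D * a^2 + lam * real n - (D - adj_eigenvalues n E ! 0 + lam) * a^2"
    using bound'[of "\<lambda>_. 1"] by (simp add: a_def)
  also have "\<dots> \<le> D * a^2 + lam * (real n - a^2)"
    using mult_right_mono[OF mu_le_D, of "a^2"] by (simp add: algebra_simps)
  finally have "(real n - a^2) * (D - lam) \<le> real n * (D - d)"
    by (simp add: algebra_simps)
  then have "real n - a^2 \<le> real n * (D - d) / (D - lam)"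
    using gap by (simp add: D_def lam_def field_simps)
  moreover have "adj_form n E f \<le> D * (\<Sum>i<n. v i * f i)^2 + lam * (\<Sum>i<n. (f i)^2)" for f
  proof -
    have "0 \<le> (D - adj_eigenvalues n E ! 0 + lam) * (\<Sum>i<n. v i * f i)^2"
      using mu_le_D lam0 by (intro mult_nonneg_nonneg) auto
    then show ?thesis using bound'[of f] by linarith
  qed
  ultimately show ?thesis using v1 by (auto simp: a_def)
qed

lemma sum_subset_sq_le:
  fixes v :: "nat \<Rightarrow> real"
  assumes v1: "(\<Sum>i<n. (v i)^2) = 1" and J: "J \<subseteq> {..<n}" and n: "0 < n"
  defines "k \<equiv> real (card J)" and "a \<equiv> (\<Sum>i<n. v i)"
  shows "(\<Sum>i\<in>J. v i)^2 \<le> 2 * k^2 / n + 2 * k * (n - a^2) / n"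
proof -
  define c where "c = a / n"
  have a2n: "a^2 \<le> n"
    using sum_squared_le_sum_of_squares[of v "{..<n}"] v1 by (simp add: a_def)
  have split: "(\<Sum>i\<in>J. v i) = c * k + (\<Sum>i\<in>J. v i - c)"
    unfolding k_def by (simp add: sum_subtractf)
  have "(\<Sum>i\<in>J. v i - c)^2 \<le> (\<Sum>i\<in>J. (v i - c)^2) * k"
    using sum_squared_le_sum_of_squares[of "\<lambda>i. v i - c" J] by (simp add: k_def)
  also have "\<dots> \<le> (\<Sum>i<n. (v i - c)^2) * k"
    by (intro mult_right_mono sum_mono2) (use J in \<open>auto simp: k_def\<close>)
  also have "(\<Sum>i<n. (v i - c)^2) = (\<Sum>i<n. (v i)^2) - 2 * c * a + n * c^2"
    by (simp add: power2_diff sum.distrib sum_subtractf sum_distrib_left a_def mult_ac)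
  also have "\<dots> = (n - a^2) / n"
    using v1 n by (simp add: c_def field_simps power2_eq_square)
  finally have dev: "(\<Sum>i\<in>J. v i - c)^2 \<le> k * (n - a^2) / n" by (simp add: mult.commute)
  have mean: "(c * k)^2 \<le> k^2 / n"
  proof -
    have "(c * k)^2 = a^2 * k^2 / n^2" by (simp add: c_def power_mult_distrib power_divide)
    also have "\<dots> \<le> n * k^2 / n^2" by (intro divide_right_mono mult_right_mono a2n) auto
    finally show ?thesis using n by (simp add: power2_eq_square)
  qed
  have "(\<Sum>i\<in>J. v i)^2 \<le> 2 * (c * k)^2 + 2 * (\<Sum>i\<in>J. v i - c)^2"
    unfolding split using sum_squares_bound[of "c * k" "\<Sum>i\<in>J. v i - c"]
    by (simp add: power2_sum algebra_simps)
  then show ?thesis using mean dev by simp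
qed

lemma internal_degree_sum_le:
  assumes sg: "simple_graph n E" and n: "2 \<le> n" and gap: "lambda_graph n E < real (max_deg n E)"
    and J: "J \<subseteq> {..<n}"
  defines "D \<equiv> real (max_deg n E)" and "d \<equiv> real (min_deg n E)" and "lam \<equiv> lambda_graph n E"
    and "k \<equiv> real (card J)"
  shows "(\<Sum>i\<in>J. real (card (nbrs n E i \<inter> J))) \<le> D * (2 * k^2 / n + 2 * k * (D - d) / (D - lam)) + lam * k"
proof -
  obtain v where v1: "(\<Sum>i<n. (v i)^2) = 1"
    and near: "real n - (\<Sum>i<n. v i)^2 \<le> real n * (D - d) / (D - lam)"
    and bound: "\<And>f. adj_form n E f \<le> D * (\<Sum>i<n. v i * f i)^2 + lam * (\<Sum>i<n. (f i)^2)"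
    using adj_top_eigenvector_near_constant[OF sg n gap] unfolding D_def d_def lam_def by blast
  define b where "b = (\<Sum>i\<in>J. v i)"
  have "(\<Sum>i<n. v i * (if i \<in> J then 1 else 0)) = b"
    using J by (simp add: b_def sum.If_cases Int_absorb1 if_distrib cong: if_cong)
  moreover have "(\<Sum>i<n. (if i \<in> J then 1 else 0 :: real)^2) = k"
  proof -
    have "(\<Sum>i<n. (if i \<in> J then 1 else 0 :: real)^2) = (\<Sum>i<n. if i \<in> J then 1 else 0)"
      by (intro sum.cong) auto
    also have "\<dots> = k" using J by (simp add: k_def sum.If_cases Int_absorb1)
    finally show ?thesis .
  qed
  ultimately have sparse: "(\<Sum>i\<in>J. real (card (nbrs n E i \<inter> J))) \<le> D * b^2 + lam * k"
    using bound[of "\<lambda>i. if i \<in> J then 1 else 0"] adj_form_indicator[OF J] by simp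
  have "b^2 \<le> 2 * k^2 / n + 2 * k * (D - d) / (D - lam)"
  proof -
    have "(real n - (\<Sum>i<n. v i)^2) / n \<le> (D - d) / (D - lam)"
      using near n by (simp add: field_simps)
    then have "k * ((real n - (\<Sum>i<n. v i)^2) / n) \<le> k * ((D - d) / (D - lam))"
      by (intro mult_left_mono) (simp_all add: k_def)
    then show ?thesis using sum_subset_sq_le[OF v1 J] n unfolding b_def k_def by simp
  qed
  then have "D * b^2 \<le> D * (2 * k^2 / n + 2 * k * (D - d) / (D - lam))"
    by (intro mult_left_mono) (simp_all add: D_def)
  with sparse show ?thesis by linarith
qed

section \<open>The rumour process\<close>

lemma subset_next_informed: "I \<subseteq> next_informed P n I c"
  by (cases P) auto

lemma set_pmf_choice_nbrs:
  "x \<in> set_pmf (choice_pmf n E q v) \<Longrightarrow> fst x = Some u \<Longrightarrow> u \<in> nbrs n E v"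
  unfolding choice_pmf_def by (auto split: if_splits simp: set_pmf_of_set)

lemma set_pmf_round_choices:
  "c \<in> set_pmf (round_choices n E q) \<Longrightarrow> v < n \<Longrightarrow> c v \<in> set_pmf (choice_pmf n E q v)"
  unfolding round_choices_def using set_Pi_pmf_subset'[of "{..<n}" "(None, False)" "choice_pmf n E q"]
  by (auto simp: PiE_dflt_def)

lemma next_informed_subset:
  assumes "c \<in> set_pmf (round_choices n E q)" "I \<subseteq> {..<n}"
  shows "next_informed P n I c \<subseteq> {..<n}"
proof -
  have "u < n" if "v < n" "c v = (Some u, True)" for u v
    using set_pmf_choice_nbrs[OF set_pmf_round_choices[OF assms(1) that(1)], of u] that(2)
    by (auto simp: nbrs_def)
  then show ?thesis using assms(2) by (cases P) auto
qed

lemma set_pmf_rumour_round: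
  assumes "I \<subseteq> {..<n}" "J \<in> set_pmf (rumour_round P n E q I)"
  shows "I \<subseteq> J \<and> J \<subseteq> {..<n}"
proof -
  from assms(2) obtain c where c: "c \<in> set_pmf (round_choices n E q)" and J: "J = next_informed P n I c"
    by (auto simp: rumour_round_def)
  then show ?thesis using subset_next_informed next_informed_subset[OF c assms(1)] by blast
qed

lemma set_pmf_rumour_run:
  assumes "S \<subseteq> {..<n}" "J \<in> set_pmf (rumour_run P n E q k S)"
  shows "S \<subseteq> J \<and> J \<subseteq> {..<n}"
  using assms(2)
proof (induct k arbitrary: J)
  case (Suc k)
  then obtain I where "I \<in> set_pmf (rumour_run P n E q k S)" "J \<in> set_pmf (rumour_round P n E q I)"
    by auto
  then show ?case using Suc(1) set_pmf_rumour_round by blast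
qed (use assms(1) in simp)

definition potential :: "nat \<Rightarrow> nat set \<Rightarrow> ennreal" where
  "potential m J = (if card J < m then ennreal ((1/2) ^ card J) else 0)"

lemma potential_le_1: "potential m J \<le> 1"
  by (simp add: potential_def power_le_one)

lemma nn_integral_potential_round_le:
  assumes I: "I \<subseteq> {..<n}" and p: "0 \<le> p" "p \<le> 1"
    and grow: "card I < m \<Longrightarrow> p \<le> measure_pmf.prob (rumour_round P n E q I) {J. card I < card J}"
  shows "(\<integral>\<^sup>+J. potential m J \<partial>rumour_round P n E q I) \<le> ennreal (1 - p/2) * potential m I"
proof -
  let ?M = "rumour_round P n E q I"
  have grows: "card I \<le> card J" if "J \<in> set_pmf ?M" for J
    using set_pmf_rumour_round[OF I that] by (meson card_mono finite_lessThan finite_subset)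
  show ?thesis
  proof (cases "card I < m")
    case False
    have "potential m J = 0" if "J \<in> set_pmf ?M" for J
      using grows[OF that] False by (simp add: potential_def)
    then have "(\<integral>\<^sup>+J. potential m J \<partial>?M) = (\<integral>\<^sup>+J. 0 \<partial>?M)"
      by (intro nn_integral_cong_AE AE_pmfI)
    then show ?thesis by simp
  next
    case True
    define h :: real where "h = (1/2) ^ Suc (card I)"
    have "potential m J \<le> ennreal h + ennreal h * indicator {J. card J \<le> card I} J"
      if "J \<in> set_pmf ?M" for J
    proof (cases "card J \<le> card I")
      case True
      then have "potential m J = ennreal (h + h)"
        using grows[OF that] \<open>card I < m\<close> by (simp add: potential_def h_def)
      then show ?thesis using True by (simp add: h_def ennreal_plus[symmetric] del: ennreal_plus)
    next
      case False
      then have "potential m J \<le> ennreal h"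
        using power_decreasing[of "Suc (card I)" "card J" "1/2::real"]
        by (auto simp: potential_def h_def intro!: ennreal_leI)
      then show ?thesis using False by simp
    qed
    then have "(\<integral>\<^sup>+J. potential m J \<partial>?M) \<le> (\<integral>\<^sup>+J. ennreal h + ennreal h * indicator {J. card J \<le> card I} J \<partial>?M)"
      by (intro nn_integral_mono_AE AE_pmfI)
    also have "\<dots> = ennreal h + ennreal h * emeasure ?M {J. card J \<le> card I}"
      by (simp add: nn_integral_add nn_integral_cmult_indicator measure_pmf.emeasure_space_1)
    also have "emeasure ?M {J. card J \<le> card I} = ennreal (1 - measure_pmf.prob ?M {J. card I < card J})"
    proof -
      have "measure_pmf.prob ?M {J. card J \<le> card I} = measure_pmf.prob ?M (space ?M - {J. card I < card J})"
        by (rule arg_cong[where f = "measure_pmf.prob ?M"]) auto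
      also have "\<dots> = 1 - measure_pmf.prob ?M {J. card I < card J}"
        by (rule measure_pmf.prob_compl) simp
      finally show ?thesis by (simp add: measure_pmf.emeasure_eq_measure)
    qed
    also have "ennreal h + ennreal h * \<dots> = ennreal (h + h * (1 - measure_pmf.prob ?M {J. card I < card J}))"
      by (simp add: h_def measure_pmf.prob_le_1 ennreal_mult[symmetric] ennreal_plus[symmetric] del: ennreal_plus)
    also have "\<dots> \<le> ennreal ((1 - p/2) * (1/2) ^ card I)"
      using grow[OF True] by (intro ennreal_leI) (simp add: h_def field_simps mult_left_mono)
    also have "\<dots> = ennreal (1 - p/2) * potential m I"
      using True p by (simp add: potential_def ennreal_mult)
    finally show ?thesis .
  qed
qed

lemma nn_integral_potential_run_le:
  assumes S: "S \<subseteq> {..<n}" and p: "0 \<le> p" "p \<le> 1"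
    and grow: "\<And>I. S \<subseteq> I \<Longrightarrow> I \<subseteq> {..<n} \<Longrightarrow> card I < m \<Longrightarrow>
        p \<le> measure_pmf.prob (rumour_round P n E q I) {J. card I < card J}"
  shows "(\<integral>\<^sup>+J. potential m J \<partial>rumour_run P n E q k S) \<le> ennreal ((1 - p/2)^k) * potential m S"
proof (induct k)
  case 0
  then show ?case by (simp add: nn_integral_return)
next
  case (Suc k)
  have "(\<integral>\<^sup>+J. potential m J \<partial>rumour_run P n E q (Suc k) S)
      = (\<integral>\<^sup>+I. (\<integral>\<^sup>+J. potential m J \<partial>rumour_round P n E q I) \<partial>rumour_run P n E q k S)"
    by (simp add: nn_integral_bind_pmf)
  also have "\<dots> \<le> (\<integral>\<^sup>+I. ennreal (1 - p/2) * potential m I \<partial>rumour_run P n E q k S)"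
    using set_pmf_rumour_run[OF S] grow p
    by (intro nn_integral_mono_AE AE_pmfI nn_integral_potential_round_le) auto
  also have "\<dots> = ennreal (1 - p/2) * (\<integral>\<^sup>+I. potential m I \<partial>rumour_run P n E q k S)"
    by (rule nn_integral_cmult) simp
  also have "\<dots> \<le> ennreal (1 - p/2) * (ennreal ((1 - p/2)^k) * potential m S)"
    by (rule mult_left_mono[OF Suc]) simp
  also have "\<dots> = ennreal ((1 - p/2)^Suc k) * potential m S"
    using p by (simp add: ennreal_mult mult.assoc)
  finally show ?case .
qed

lemma prob_rumour_run_small_le:
  assumes S: "S \<subseteq> {..<n}" and p: "0 \<le> p" "p \<le> 1"
    and grow: "\<And>I. S \<subseteq> I \<Longrightarrow> I \<subseteq> {..<n} \<Longrightarrow> card I < m \<Longrightarrow>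
        p \<le> measure_pmf.prob (rumour_round P n E q I) {J. card I < card J}"
  shows "measure_pmf.prob (rumour_run P n E q k S) {J. card J < m} \<le> 2^m * (1 - p/2)^k"
proof -
  let ?M = "rumour_run P n E q k S"
  have indicator_le: "indicator {J. card J < m} J \<le> ennreal (2^m) * potential m J" for J :: "nat set"
  proof (cases "card J < m")
    case True
    have "(1::real) \<le> 2^m * (1/2)^card J"
      using power_increasing[of "card J" m "2::real"] True by (simp add: field_simps)
    then show ?thesis using True by (simp add: potential_def ennreal_mult[symmetric] ennreal_leI)
  qed simp
  have "emeasure ?M {J. card J < m} = (\<integral>\<^sup>+J. indicator {J. card J < m} J \<partial>?M)"
    by (rule nn_integral_indicator[symmetric]) simp
  also have "\<dots> \<le> (\<integral>\<^sup>+J. ennreal (2^m) * potential m J \<partial>?M)"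
    by (rule nn_integral_mono) (rule indicator_le)
  also have "\<dots> = ennreal (2^m) * (\<integral>\<^sup>+J. potential m J \<partial>?M)"
    by (rule nn_integral_cmult) simp
  also have "\<dots> \<le> ennreal (2^m) * (ennreal ((1 - p/2)^k) * potential m S)"
    by (intro mult_left_mono nn_integral_potential_run_le[OF S p] grow) auto
  also have "\<dots> \<le> ennreal (2^m) * (ennreal ((1 - p/2)^k) * 1)"
    by (intro mult_left_mono potential_le_1) (rule zero_le)+
  also have "\<dots> = ennreal (2^m * (1 - p/2)^k)"
    using p by (simp add: ennreal_mult)
  finally show ?thesis
    using p by (simp add: measure_pmf.emeasure_eq_measure ennreal_le_iff)
qed

lemma prob_round_choices_component:
  assumes "v < n"
  shows "measure_pmf.prob (round_choices n E q) {c. c v \<in> T} = measure_pmf.prob (choice_pmf n E q v) T"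
proof -
  have "map_pmf (\<lambda>c. c v) (round_choices n E q) = choice_pmf n E q v"
    unfolding round_choices_def using assms by (simp add: Pi_pmf_component)
  then have "measure_pmf.prob (map_pmf (\<lambda>c. c v) (round_choices n E q)) T = measure_pmf.prob (choice_pmf n E q v) T"
    by simp
  then show ?thesis by (simp add: vimage_def)
qed

lemma prob_choice_call_into:
  fixes q :: real
  assumes q: "0 \<le> q" "q \<le> 1" and U: "U \<subseteq> nbrs n E v" and nb: "nbrs n E v \<noteq> {}"
  shows "measure_pmf.prob (choice_pmf n E q v) ((\<lambda>u. (Some u, True)) ` U) = q * card U / deg n E v"
proof -
  have "(\<lambda>u. (Some u, True)) ` U = Some ` U \<times> {True}" by auto
  then have "measure_pmf.prob (choice_pmf n E q v) ((\<lambda>u. (Some u, True)) ` U)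
      = measure_pmf.prob (pmf_of_set (nbrs n E v)) U * measure_pmf.prob (bernoulli_pmf q) {True}"
    using nb finite_subset[OF U finite_nbrs]
    by (simp add: choice_pmf_def measure_pmf_prob_product inj_vimage_image_eq)
  also have "\<dots> = q * card U / deg n E v"
    using nb U q by (simp add: measure_pmf_of_set Int_absorb1 measure_pmf_single deg_def)
  finally show ?thesis .
qed

lemma prob_choice_avoid:
  fixes q :: real
  assumes q: "0 \<le> q" "q \<le> 1" and u: "u \<in> nbrs n E v"
  shows "measure_pmf.prob (choice_pmf n E q v) (- {(Some u, True)}) = 1 - q / deg n E v"
proof -
  have nb: "nbrs n E v \<noteq> {}" using u by auto
  have "pmf (choice_pmf n E q v) (Some u, True) = pmf (pmf_of_set (nbrs n E v)) u * pmf (bernoulli_pmf q) True"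
    using nb by (simp add: choice_pmf_def pmf_pair pmf_map_inj')
  also have "\<dots> = q / deg n E v" using u q nb by (simp add: deg_def)
  finally show ?thesis
    using measure_pmf.prob_compl[of "{(Some u, True)}" "choice_pmf n E q v"]
    by (simp add: Compl_eq_Diff_UNIV measure_pmf_single)
qed

lemma card_lt_next_informed:
  assumes c: "c \<in> set_pmf (round_choices n E q)" and I: "I \<subseteq> {..<n}"
    and u: "u \<notin> I" "u \<in> next_informed P n I c"
  shows "card I < card (next_informed P n I c)"
proof -
  have "finite (next_informed P n I c)"
    using next_informed_subset[OF c I] finite_subset by blast
  moreover have "insert u I \<subseteq> next_informed P n I c" using u subset_next_informed by blast
  ultimately have "card (insert u I) \<le> card (next_informed P n I c)" by (rule card_mono)
  then show ?thesis using u finite_subset[OF I] by simp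
qed

lemma prob_push_grows:
  fixes q :: real
  assumes q: "0 \<le> q" "q \<le> 1" and I: "I \<subseteq> {..<n}" and i: "i \<in> I" and P: "P \<noteq> Pull"
    and nb: "nbrs n E i \<noteq> {}"
  shows "q * card (nbrs n E i - I) / deg n E i \<le> measure_pmf.prob (rumour_round P n E q I) {J. card I < card J}"
proof -
  let ?M = "round_choices n E q" and ?U = "nbrs n E i - I"
  have iN: "i < n" using I i by auto
  have "q * card ?U / deg n E i = measure_pmf.prob ?M {c. c i \<in> (\<lambda>u. (Some u, True)) ` ?U}"
    using prob_round_choices_component[OF iN] prob_choice_call_into[of q ?U n E i] q nb by simp
  also have "\<dots> \<le> measure_pmf.prob ?M {c. card I < card (next_informed P n I c)}"
  proof (rule measure_pmf.finite_measure_mono_AE[OF AE_pmfI[OF impI]])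
    fix c assume c: "c \<in> set_pmf ?M" and "c \<in> {c. c i \<in> (\<lambda>u. (Some u, True)) ` ?U}"
    then obtain u where u: "u \<notin> I" "c i = (Some u, True)" by auto
    then have "u \<in> next_informed P n I c" using i iN P by (cases P) auto
    then have "card I < card (next_informed P n I c)" by (rule card_lt_next_informed[OF c I u(1)])
    then show "c \<in> {c. card I < card (next_informed P n I c)}" by simp
  qed simp
  finally show ?thesis by (simp add: rumour_round_def vimage_def)
qed

lemma prob_pull_grows:
  fixes q :: real
  assumes sg: "simple_graph n E" and q: "0 \<le> q" "q \<le> 1" and I: "I \<subseteq> {..<n}" and i: "i \<in> I"
  shows "1 - (\<Prod>u \<in> nbrs n E i - I. 1 - q / deg n E u)
    \<le> measure_pmf.prob (rumour_round Pull n E q I) {J. card I < card J}"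
proof -
  let ?M = "round_choices n E q" and ?U = "nbrs n E i - I"
  define B where "B u = (if u \<in> ?U then - {(Some i, True)} else UNIV)" for u
  have UN: "?U \<subseteq> {..<n}" by (auto simp: nbrs_def)
  have i_nbr: "i \<in> nbrs n E u" if "u \<in> ?U" for u
    using that sg I i unfolding nbrs_def simple_graph_def by auto
  have "measure_pmf.prob ?M (Pi {..<n} B) = (\<Prod>u<n. measure_pmf.prob (choice_pmf n E q u) (B u))"
    unfolding round_choices_def by (rule measure_Pi_pmf_Pi) simp
  also have "\<dots> = (\<Prod>u<n. if u \<in> ?U then 1 - q / deg n E u else 1)"
    by (intro prod.cong refl) (simp add: B_def prob_choice_avoid[OF q i_nbr])
  also have "\<dots> = (\<Prod>u \<in> ?U. 1 - q / deg n E u)"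
    using UN by (simp add: prod.If_cases Int_absorb1 set_diff_eq)
  finally have fail: "measure_pmf.prob ?M (Pi {..<n} B) = (\<Prod>u \<in> ?U. 1 - q / deg n E u)" .
  have "1 - measure_pmf.prob ?M (Pi {..<n} B) = measure_pmf.prob ?M (space ?M - Pi {..<n} B)"
    by (rule measure_pmf.prob_compl[symmetric]) simp
  also have "\<dots> \<le> measure_pmf.prob ?M {c. card I < card (next_informed Pull n I c)}"
  proof (rule measure_pmf.finite_measure_mono_AE[OF AE_pmfI[OF impI]])
    fix c assume c: "c \<in> set_pmf ?M" and "c \<in> space ?M - Pi {..<n} B"
    then obtain u where u: "u < n" "u \<notin> I" "c u = (Some i, True)"
      by (auto simp: Pi_def B_def split: if_splits)
    then have "u \<in> next_informed Pull n I c" using i by auto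
    then have "card I < card (next_informed Pull n I c)" by (rule card_lt_next_informed[OF c I u(2)])
    then show "c \<in> {c. card I < card (next_informed Pull n I c)}" by simp
  qed simp
  finally show ?thesis using fail by (simp add: rumour_round_def vimage_def)
qed

lemma prob_round_grows:
  fixes q \<gamma> :: real
  assumes sg: "simple_graph n E" and q: "0 \<le> q" "q \<le> 1" and I: "I \<subseteq> {..<n}" and i: "i \<in> I"
    and U: "nbrs n E i - I \<noteq> {}"
    and many: "\<And>u. u \<in> insert i (nbrs n E i - I) \<Longrightarrow> \<gamma> * real (deg n E u) \<le> real (card (nbrs n E i - I))"
  shows "1 - exp (- (q * \<gamma>)) \<le> measure_pmf.prob (rumour_round P n E q I) {J. card I < card J}"
proof (cases "0 < \<gamma>")
  case False
  then have "1 - exp (- (q * \<gamma>)) \<le> 0" using q by (simp add: mult_nonneg_nonpos)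
  then show ?thesis by (meson measure_nonneg order_trans)
next
  case True
  let ?U = "nbrs n E i - I"
  have finU: "finite ?U" by simp
  have deg_pos: "0 < deg n E u" if "u \<in> insert i ?U" for u
  proof -
    have "i \<in> nbrs n E u" if "u \<in> ?U" using that sg I i unfolding nbrs_def simple_graph_def by auto
    then show ?thesis using that U by (auto simp: deg_def card_gt_0_iff)
  qed
  have exp_le: "1 - exp (- x) \<le> x" for x :: real using exp_ge_add_one_self[of "- x"] by simp
  show ?thesis
  proof (cases "P = Pull")
    case False
    have "q * (\<gamma> * deg n E i) \<le> q * card ?U"
      using many[of i] q by (intro mult_left_mono) auto
    then have "q * \<gamma> \<le> q * card ?U / deg n E i"
      using deg_pos[of i] by (simp add: field_simps)
    then show ?thesis
      using exp_le[of "q * \<gamma>"] prob_push_grows[OF q I i False] U by fastforce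
  next
    case True
    have "(\<Prod>u \<in> ?U. 1 - q / deg n E u) \<le> (\<Prod>u \<in> ?U. exp (- (q / deg n E u)))"
    proof (rule prod_mono)
      fix u assume "u \<in> ?U"
      then have "q / deg n E u \<le> 1" using deg_pos[of u] q by (simp add: field_simps)
      then show "0 \<le> 1 - q / deg n E u \<and> 1 - q / deg n E u \<le> exp (- (q / deg n E u))"
        using exp_ge_add_one_self[of "- (q / deg n E u)"] by simp
    qed
    also have "\<dots> = exp (- (\<Sum>u \<in> ?U. q / deg n E u))"
      by (simp add: exp_sum[OF finU, symmetric] sum_negf)
    also have "\<dots> \<le> exp (- (q * \<gamma>))"
    proof -
      have "q * (\<gamma> / card ?U) \<le> q / deg n E u" if "u \<in> ?U" for u
      proof -
        have "0 < card ?U" using U by (simp add: card_gt_0_iff)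
        then have "\<gamma> / card ?U \<le> 1 / deg n E u"
          using many[of u] deg_pos[of u] that by (simp add: field_simps)
        then show ?thesis using mult_left_mono[OF _ q(1)] by fastforce
      qed
      then have "(\<Sum>u \<in> ?U. q * (\<gamma> / card ?U)) \<le> (\<Sum>u \<in> ?U. q / deg n E u)" by (rule sum_mono)
      then show ?thesis using U by simp
    qed
    finally show ?thesis using prob_pull_grows[OF sg q I i] True by simp
  qed
qed

section \<open>Growth of small informed sets in expanders\<close>

lemma connected_graph_nbrs_nonempty:
  assumes sg: "simple_graph n E" and conn: "connected_graph n E" and n: "2 \<le> n" and v: "v < n"
  shows "nbrs n E v \<noteq> {}"
proof -
  obtain w where w: "w < n" "w \<noteq> v"
  proof (cases "v = 0")
    case True
    then show ?thesis using that[of 1] n by auto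
  next
    case False
    then show ?thesis using that[of 0] n by auto
  qed
  have "(v, w) \<in> {(a, b). E a b}\<^sup>*" using conn v w(1) unfolding connected_graph_def by blast
  then obtain x where "E v x" using w(2) by (cases rule: converse_rtranclE) auto
  then have "x \<in> nbrs n E v" using sg unfolding simple_graph_def nbrs_def by auto
  then show ?thesis by auto
qed

lemma connected_graph_min_deg_pos:
  assumes "simple_graph n E" "connected_graph n E" "2 \<le> n"
  shows "0 < min_deg n E"
proof -
  have "0 < deg n E v" if "v < n" for v
    using connected_graph_nbrs_nonempty[OF assms that] by (simp add: deg_def card_gt_0_iff)
  moreover have "0 \<in> {..<n}" using assms(3) by simp
  then have "{..<n} \<noteq> {}" by blast
  ultimately show ?thesis unfolding min_deg_def by (subst Min_gr_iff) auto
qed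

lemma exists_vertex_with_many_outside_nbrs:
  assumes sub: "\<forall>u v. H u v \<longrightarrow> G u v"
    and half: "\<forall>v<n. real (deg n G v) \<le> 2 * real (deg n H v)"
    and J: "J \<subseteq> {..<n}" "J \<noteq> {}"
    and sparse: "(\<Sum>i\<in>J. real (card (nbrs n G i \<inter> J))) \<le> real (card J) * real (min_deg n G) / 4"
  shows "\<exists>i\<in>J. real (min_deg n G) / 4 \<le> real (card (nbrs n H i - J))"
proof (rule ccontr)
  define d where "d = real (min_deg n G)"
  assume "\<not> ?thesis"
  then have "(\<Sum>i\<in>J. real (card (nbrs n H i - J))) < (\<Sum>i\<in>J. d / 4)"
    using J finite_subset[OF J(1)] by (intro sum_strict_mono) (auto simp: d_def)
  moreover have "(\<Sum>i\<in>J. d / 2 - real (card (nbrs n G i \<inter> J))) \<le> (\<Sum>i\<in>J. real (card (nbrs n H i - J)))"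
  proof (rule sum_mono)
    fix i assume i: "i \<in> J"
    have "card (nbrs n H i \<inter> J) \<le> card (nbrs n G i \<inter> J)"
      using sub by (intro card_mono) (auto simp: nbrs_def)
    moreover have "d / 2 \<le> real (deg n H i)"
    proof -
      have iN: "i < n" using i J by auto
      then have "real (deg n G i) \<le> 2 * real (deg n H i)" using half by blast
      moreover have "d \<le> real (deg n G i)" using min_deg_le_deg[OF iN] by (simp add: d_def)
      ultimately show ?thesis by linarith
    qed
    moreover have "card (nbrs n H i - J) = deg n H i - card (nbrs n H i \<inter> J)"
      by (simp add: deg_def card_Diff_subset_Int)
    moreover have "card (nbrs n H i \<inter> J) \<le> deg n H i"
      unfolding deg_def by (intro card_mono) auto
    ultimately show "d / 2 - real (card (nbrs n G i \<inter> J)) \<le> real (card (nbrs n H i - J))"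
      by (simp add: of_nat_diff)
  qed
  ultimately show False using sparse by (simp add: sum_subtractf d_def)
qed

lemma small_set_bound_arith:
  fixes D d lam k n :: real
  assumes d0: "0 < d" and dD: "d \<le> D" and Dd: "D \<le> 21/20 * d" and lam0: "0 \<le> lam" and lamD: "lam \<le> D / 20"
    and k0: "0 \<le> k" and kn: "k \<le> n / 40" and n: "0 < n"
  shows "D * (2 * k^2 / n + 2 * k * (D - d) / (D - lam)) + lam * k \<le> k * d / 4"
proof -
  have Dl: "0 < D - lam" using lamD d0 dD by simp
  have "(D - d) / (D - lam) \<le> 1/19" using Dl Dd lamD by (simp add: divide_le_eq)
  from mult_left_mono[OF this, of "2 * k"] k0
  have "2 * k * (D - d) / (D - lam) \<le> 2 * k / 19" by simp
  moreover have "k^2 / n \<le> k / 40"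
    using mult_left_mono[OF kn k0] n by (simp add: power2_eq_square divide_le_eq)
  ultimately have "D * (2 * k^2 / n + 2 * k * (D - d) / (D - lam)) \<le> D * (2 * (k / 40) + 2 * k / 19)"
    using d0 dD by (intro mult_left_mono) auto
  moreover have "lam * k \<le> D / 20 * k" by (rule mult_right_mono[OF lamD k0])
  moreover have "D * (2 * (k / 40) + 2 * k / 19) + D / 20 * k = 39/190 * (D * k)"
    by (simp add: algebra_simps)
  moreover have "D * k \<le> 21/20 * (d * k)" using mult_right_mono[OF Dd k0] by simp
  moreover have "0 \<le> d * k" using d0 k0 by simp
  moreover have "k * d / 4 = (d * k) / 4" by simp
  ultimately show ?thesis by linarith
qed

lemma expander_round_grows:
  fixes q :: real and G H :: "nat \<Rightarrow> nat \<Rightarrow> bool"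
  assumes sgG: "simple_graph n G" and connG: "connected_graph n G" and sgH: "simple_graph n H"
    and sub: "\<forall>u v. H u v \<longrightarrow> G u v" and half: "\<forall>v<n. real (deg n G v) \<le> 2 * real (deg n H v)"
    and q: "0 \<le> q" "q \<le> 1" and n: "2 \<le> n"
    and Dd: "real (max_deg n G) \<le> 21/20 * real (min_deg n G)"
    and lamD: "lambda_graph n G \<le> real (max_deg n G) / 20"
    and I: "I \<subseteq> {..<n}" "I \<noteq> {}" and small: "real (card I) \<le> real n / 40"
  shows "1 - exp (- (q / 8)) \<le> measure_pmf.prob (rumour_round P n H q I) {J. card I < card J}"
proof -
  define D where "D = real (max_deg n G)"
  define d where "d = real (min_deg n G)"
  define lam where "lam = lambda_graph n G"
  have d0: "0 < d" using connected_graph_min_deg_pos[OF sgG connG n] by (simp add: d_def)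
  have dD: "d \<le> D" using min_deg_le_deg[of 0 n G] deg_le_max_deg[of 0 n G] n by (simp add: d_def D_def)
  have "(\<Sum>i\<in>I. real (card (nbrs n G i \<inter> I)))
      \<le> D * (2 * (real (card I))^2 / n + 2 * real (card I) * (D - d) / (D - lam)) + lam * real (card I)"
    using internal_degree_sum_le[OF sgG n _ I(1)] lamD d0 dD by (simp add: D_def d_def lam_def)
  also have "\<dots> \<le> real (card I) * d / 4"
    using small_set_bound_arith[OF d0 dD _ _ _ _ small] Dd lamD lambda_graph_ge_0 n
    by (simp add: D_def d_def lam_def)
  finally obtain i where i: "i \<in> I" and many: "d / 4 \<le> real (card (nbrs n H i - I))"
    using exists_vertex_with_many_outside_nbrs[OF sub half I] by (auto simp: d_def)
  have "1/8 * real (deg n H u) \<le> real (card (nbrs n H i - I))" if "u \<in> insert i (nbrs n H i - I)" for u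
  proof -
    have "u < n" using that i I(1) by (auto simp: nbrs_def)
    then have "real (deg n H u) \<le> D"
      using deg_mono[OF sub, of n u] deg_le_max_deg[of u n G] by (simp add: D_def)
    then show ?thesis using Dd many d0 by (simp add: D_def d_def)
  qed
  moreover have "nbrs n H i - I \<noteq> {}"
  proof
    assume empty: "nbrs n H i - I = {}"
    show False using many d0 unfolding empty by simp
  qed
  ultimately have "1 - exp (- (q * (1/8))) \<le> measure_pmf.prob (rumour_round P n H q I) {J. card I < card J}"
    by (intro prob_round_grows[OF sgH q I(1) i])
  then show ?thesis by simp
qed

lemma expander_prob_run_small_le:
  fixes q :: real and G H :: "nat \<Rightarrow> nat \<Rightarrow> bool"
  assumes sgG: "simple_graph n G" and connG: "connected_graph n G" and sgH: "simple_graph n H"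
    and sub: "\<forall>u v. H u v \<longrightarrow> G u v" and half: "\<forall>v<n. real (deg n G v) \<le> 2 * real (deg n H v)"
    and q: "0 \<le> q" "q \<le> 1" and n: "2 \<le> n"
    and Dd: "real (max_deg n G) \<le> 21/20 * real (min_deg n G)"
    and lamD: "lambda_graph n G \<le> real (max_deg n G) / 20"
    and S: "S \<subseteq> {..<n}" "S \<noteq> {}" and m: "real m \<le> real n / 40"
  shows "measure_pmf.prob (rumour_run P n H q k S) {J. card J < m} \<le> 2^m * ((1 + exp (- (q / 8))) / 2)^k"
proof -
  have "measure_pmf.prob (rumour_run P n H q k S) {J. card J < m} \<le> 2^m * (1 - (1 - exp (- (q / 8))) / 2)^k"
  proof (rule prob_rumour_run_small_le[OF S(1)])
    fix I assume "S \<subseteq> I" "I \<subseteq> {..<n}" "card I < m"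
    then show "1 - exp (- (q / 8)) \<le> measure_pmf.prob (rumour_round P n H q I) {J. card I < card J}"
      using S(2) m by (intro expander_round_grows[OF sgG connG sgH sub half q n Dd lamD]) auto
  qed (use q in auto)
  then show ?thesis by (simp add: field_simps)
qed

lemma real_nat_ceiling_le: "0 \<le> x \<Longrightarrow> real (nat \<lceil>x\<rceil>) \<le> x + 1"
  by (simp add: of_nat_int_ceiling)

lemma less_nat_ceiling_iff:
  assumes "0 \<le> s"
  shows "c < nat \<lceil>s\<rceil> \<longleftrightarrow> real c < s"
proof -
  have "c < nat \<lceil>s\<rceil> \<longleftrightarrow> int c < \<lceil>s\<rceil>" using assms by linarith
  then show ?thesis by (simp add: less_ceiling_iff)
qed

lemma expander_prob_informed_ge:
  fixes q :: real and G H :: "nat \<Rightarrow> nat \<Rightarrow> bool"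
  assumes sgG: "simple_graph n G" and connG: "connected_graph n G" and sgH: "simple_graph n H"
    and sub: "\<forall>u v. H u v \<longrightarrow> G u v" and half: "\<forall>v<n. real (deg n G v) \<le> 2 * real (deg n H v)"
    and q: "0 \<le> q" "q \<le> 1" and n: "2 \<le> n"
    and Dd: "real (max_deg n G) \<le> 21/20 * real (min_deg n G)"
    and lamD: "lambda_graph n G \<le> real (max_deg n G) / 20"
    and S: "S \<subseteq> {..<n}" "S \<noteq> {}" and s: "0 < s" "s + 1 \<le> real n / 40"
    and r: "r = (1 + exp (- (q / 8))) / 2" and rL: "2 * r ^ L \<le> 1"
  shows "1 - 2 * r ^ L \<le> measure_pmf.prob (rumour_run P n H q (nat \<lceil>s\<rceil> * L) S) {J. s \<le> real (card J)}"
proof -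
  define m where "m = nat \<lceil>s\<rceil>"
  let ?M = "rumour_run P n H q (m * L) S"
  have "0 < m" unfolding m_def by (subst less_nat_ceiling_iff) (use s in auto)
  then have m1: "1 \<le> m" by simp
  have r0: "0 \<le> r" unfolding r by (simp add: add_nonneg_nonneg)
  have "real m \<le> s + 1" unfolding m_def by (rule real_nat_ceiling_le) (use s in simp)
  then have "real m \<le> real n / 40" using s by simp
  then have "measure_pmf.prob ?M {J. card J < m} \<le> 2^m * r^(m * L)"
    unfolding r by (rule expander_prob_run_small_le[OF sgG connG sgH sub half q n Dd lamD S])
  also have "\<dots> = (2 * r^L)^m" by (simp add: power_mult power_mult_distrib mult.commute)
  also have "\<dots> \<le> 2 * r^L"
    using power_decreasing[OF m1, of "2 * r^L"] rL r0 by simp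
  finally have "measure_pmf.prob ?M {J. card J < m} \<le> 2 * r ^ L" .
  moreover have "measure_pmf.prob ?M {J. s \<le> real (card J)} = 1 - measure_pmf.prob ?M {J. card J < m}"
  proof -
    have eq: "{J. s \<le> real (card J)} = space ?M - {J. card J < m}"
      using less_nat_ceiling_iff s(1) by (auto simp: m_def not_less)
    show ?thesis unfolding eq by (rule measure_pmf.prob_compl) simp
  qed
  ultimately show ?thesis by (simp add: m_def)
qed

lemma rounds_small_o_ln:
  "(\<lambda>n::nat. real (nat \<lceil>sqrt (ln n)\<rceil> * nat \<lceil>ln n powr (1/4)\<rceil>)) \<in> o(\<lambda>n. ln n)"
proof (rule landau_o.big_small_trans)
  show "(\<lambda>n::nat. real (nat \<lceil>sqrt (ln n)\<rceil> * nat \<lceil>ln n powr (1/4)\<rceil>))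
      \<in> O(\<lambda>n. (sqrt (ln n) + 1) * (ln n powr (1/4) + 1))"
  proof (intro bigoI[where c = 1] eventually_mono[OF eventually_ge_at_top[of "1::nat"]])
    fix n :: nat assume "1 \<le> n"
    then have l: "0 \<le> ln n" by simp
    have "real (nat \<lceil>sqrt (ln n)\<rceil> * nat \<lceil>ln n powr (1/4)\<rceil>) \<le> (sqrt (ln n) + 1) * (ln n powr (1/4) + 1)"
    proof -
      have "-1 < ln n powr (1/4)" using powr_ge_zero[of "ln n" "1/4"] by linarith
      then show ?thesis unfolding of_nat_mult using l by (intro mult_mono real_nat_ceiling_le) auto
    qed
    moreover have "0 \<le> (sqrt (ln n) + 1) * (ln n powr (1/4) + 1)" using l by simp
    ultimately show "norm (real (nat \<lceil>sqrt (ln n)\<rceil> * nat \<lceil>ln n powr (1/4)\<rceil>))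
        \<le> 1 * norm ((sqrt (ln n) + 1) * (ln n powr (1/4) + 1))"
      by (simp only: real_norm_def abs_of_nonneg of_nat_0_le_iff mult_1)
  qed
  show "(\<lambda>n::nat. (sqrt (ln n) + 1) * (ln n powr (1/4) + 1)) \<in> o(\<lambda>n. ln n)"
    by real_asymp
qed

lemma filterlim_nat_ceiling_root4_ln: "filterlim (\<lambda>n::nat. nat \<lceil>ln n powr (1/4)\<rceil>) at_top sequentially"
  unfolding filterlim_at_top
proof
  fix Z :: nat
  have "filterlim (\<lambda>n::nat. ln n powr (1/4)) at_top sequentially" by real_asymp
  then have "eventually (\<lambda>n. real Z \<le> ln n powr (1/4)) sequentially"
    unfolding filterlim_at_top by blast
  then show "eventually (\<lambda>n. Z \<le> nat \<lceil>ln n powr (1/4)\<rceil>) sequentially"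
  proof (rule eventually_mono)
    fix n assume "real Z \<le> ln n powr (1/4)"
    then have "real Z \<le> real (nat \<lceil>ln n powr (1/4)\<rceil>)" using of_nat_ceiling by (rule order_trans)
    then show "Z \<le> nat \<lceil>ln n powr (1/4)\<rceil>" by simp
  qed
qed

lemma deg_le_twice_deg_of_kept_fraction:
  assumes eps: "0 < eps" and keep: "(1/2 + eps) * real (deg n G v) \<le> real (deg n H v)"
  shows "real (deg n G v) \<le> 2 * real (deg n H v)"
proof -
  have "real (deg n G v) / 2 \<le> (1/2 + eps) * real (deg n G v)"
    using eps by (simp add: algebra_simps)
  then show ?thesis using keep by linarith
qed

lemma expander_sequence_eventually_near_regular:
  assumes "expander_sequence G"
  shows "\<forall>\<^sub>F n in sequentially. 2 \<le> n \<and> real (max_deg n (G n)) \<le> 21/20 * real (min_deg n (G n))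
           \<and> lambda_graph n (G n) \<le> real (max_deg n (G n)) / 20"
proof -
  have sg: "simple_graph n (G n)" and conn: "connected_graph n (G n)" for n
    using assms unfolding expander_sequence_def by auto
  have ratio: "(\<lambda>n. real (max_deg n (G n)) / real (min_deg n (G n))) \<longlonglongrightarrow> 1"
    and gap: "(\<lambda>n. lambda_graph n (G n)) \<in> o(\<lambda>n. real (max_deg n (G n)))"
    using assms unfolding expander_sequence_def by auto
  have "\<forall>\<^sub>F n in sequentially. real (max_deg n (G n)) / real (min_deg n (G n)) < 21/20"
    by (rule order_tendstoD(2)[OF ratio]) simp
  moreover have "\<forall>\<^sub>F n in sequentially. norm (lambda_graph n (G n)) \<le> 1/20 * norm (real (max_deg n (G n)))"
    by (rule landau_o.smallD[OF gap]) simp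
  ultimately show ?thesis using eventually_ge_at_top[of 2]
  proof eventually_elim
    case (elim n)
    then have "0 < min_deg n (G n)" using connected_graph_min_deg_pos[OF sg conn] by simp
    then show ?case using elim by (simp add: divide_less_eq)
  qed
qed

lemma expander_sequence_eventually_informed:
  fixes q r :: real and G H :: "nat \<Rightarrow> nat \<Rightarrow> nat \<Rightarrow> bool" and L :: "nat \<Rightarrow> nat"
  assumes G: "expander_sequence G" and H: "\<forall>n. simple_graph n (H n) \<and> (\<forall>u v. H n u v \<longrightarrow> G n u v)"
    and half: "\<forall>n. \<forall>v<n. real (deg n (G n) v) \<le> 2 * real (deg n (H n) v)"
    and q: "0 \<le> q" "q \<le> 1" and S: "\<forall>\<^sub>F n in sequentially. S n \<subseteq> {..<n} \<and> S n \<noteq> {}"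
    and r: "r = (1 + exp (- (q / 8))) / 2" and rL: "\<forall>\<^sub>F n in sequentially. 2 * r ^ L n \<le> 1"
  shows "\<forall>\<^sub>F n in sequentially. 1 - 2 * r ^ L n \<le>
    measure_pmf.prob (rumour_run P n (H n) q (nat \<lceil>sqrt (ln n)\<rceil> * L n) (S n)) {J. sqrt (ln n) \<le> real (card J)}"
proof -
  have large: "\<forall>\<^sub>F n in sequentially. sqrt (ln (real n)) + 1 \<le> real n / 40" by real_asymp
  show ?thesis
    using expander_sequence_eventually_near_regular[OF G] eventually_ge_at_top[of 3] S rL large
  proof eventually_elim
    case (elim n)
    have sgG: "simple_graph n (G n)" and connG: "connected_graph n (G n)"
      using G unfolding expander_sequence_def by auto
    have sgH: "simple_graph n (H n)" and sub: "\<forall>u v. H n u v \<longrightarrow> G n u v" using H by auto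
    have halfn: "\<forall>v<n. real (deg n (G n) v) \<le> 2 * real (deg n (H n) v)" using half by blast
    from elim(1) have n: "2 \<le> n" and Dd: "real (max_deg n (G n)) \<le> 21/20 * real (min_deg n (G n))"
      and lamD: "lambda_graph n (G n) \<le> real (max_deg n (G n)) / 20" by auto
    from elim(3) have Sn: "S n \<subseteq> {..<n}" "S n \<noteq> {}" by auto
    have s: "0 < sqrt (ln (real n))" using elim(2) by simp
    show ?case
      by (rule expander_prob_informed_ge[OF sgG connG sgH sub halfn q n Dd lamD Sn s elim(5) r elim(4)])
  qed
qed

theorem lemma2p13:
  fixes eps q :: real
    and G H :: "nat \<Rightarrow> nat \<Rightarrow> nat \<Rightarrow> bool"
    and P :: protocol
    and S :: "nat \<Rightarrow> nat set"
  assumes "0 < eps" and "eps \<le> 1/2"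
    and "0 < q" and "q \<le> 1"
    and "expander_sequence G"
    and "\<forall>n. simple_graph n (H n) \<and> (\<forall>u v. H n u v \<longrightarrow> G n u v)"
    and "\<forall>n. \<forall>v<n. real (deg n (H n) v) \<ge> (1/2 + eps) * real (deg n (G n) v)"
    and "eventually (\<lambda>n. S n \<subseteq> {..<n} \<and> S n \<noteq> {} \<and> real (card (S n)) < sqrt (ln (real n)))
           sequentially"
  shows "\<exists>\<tau> :: nat \<Rightarrow> nat. (\<lambda>n. real (\<tau> n)) \<in> o(\<lambda>n. ln (real n)) \<and>
           ((\<lambda>n. measure_pmf.prob (rumour_run P n (H n) q (\<tau> n) (S n))
                    {J. real (card J) \<ge> sqrt (ln (real n))}) \<longlonglongrightarrow> 1)"
proof -
  have half: "\<forall>n. \<forall>v<n. real (deg n (G n) v) \<le> 2 * real (deg n (H n) v)"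
    using deg_le_twice_deg_of_kept_fraction[OF assms(1)] assms(7) by blast
  define r where "r = (1 + exp (- (q / 8))) / 2"
  define L where "L n = nat \<lceil>ln (real n) powr (1/4)\<rceil>" for n :: nat
  have "0 \<le> r" "r < 1" using assms(3) by (simp_all add: r_def add_nonneg_nonneg)
  then have rL: "(\<lambda>n. r ^ L n) \<longlonglongrightarrow> 0"
    unfolding L_def by (intro filterlim_compose[OF LIMSEQ_power_zero filterlim_nat_ceiling_root4_ln]) simp
  let ?p = "\<lambda>n. measure_pmf.prob (rumour_run P n (H n) q (nat \<lceil>sqrt (ln n)\<rceil> * L n) (S n))
                  {J. sqrt (ln n) \<le> real (card J)}"
  have "\<forall>\<^sub>F n in sequentially. 1 - 2 * r ^ L n \<le> ?p n"
  proof (rule expander_sequence_eventually_informed[OF assms(5,6) half _ assms(4) _ r_def])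
    show "\<forall>\<^sub>F n in sequentially. S n \<subseteq> {..<n} \<and> S n \<noteq> {}" using assms(8) by (rule eventually_mono) auto
    show "\<forall>\<^sub>F n in sequentially. 2 * r ^ L n \<le> 1"
      using order_tendstoD(2)[OF rL, of "1/2"] by (rule eventually_mono) auto
  qed (use assms(3) in simp)
  moreover have "\<forall>n. ?p n \<le> 1" by (simp add: measure_pmf.prob_le_1)
  moreover have "(\<lambda>n. 1 - 2 * r ^ L n) \<longlonglongrightarrow> 1"
    using tendsto_diff[OF tendsto_const tendsto_mult[OF tendsto_const rL]] by simp
  ultimately have "?p \<longlonglongrightarrow> 1" by (rule tendsto_sandwich[OF _ always_eventually _ tendsto_const])
  then show ?thesis
    using rounds_small_o_ln by (intro exI[of _ "\<lambda>n. nat \<lceil>sqrt (ln n)\<rceil> * L n"]) (simp add: L_def)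
qed

end
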